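(* (1) Let $\theta\in\mathbb{F}_{q^3}^*$ with $N(\theta)\neq1$. Then $\mu_{\mathrm{line}}(\Pi_\theta)=\mathcal S_{-1/\theta}$ and $\mu_{\mathrm{pt}}(\Pi_\theta)=T\mathcal S_{1/\theta}$. (2) Let $\theta\in\mathbb{F}_{q^3}^*$ with $N(\theta)\neq1$. Then $\mu_{\mathrm{line}}(\Pi_\theta^\phi)$ is a $T^\phi$-sls, and $\mu_{\mathrm{pt}}(\Pi_\theta^\phi)$ is a pencil of lines $\{T^\phi X: X\in\mathcal S\}$ for some $T^\phi$-sls $\mathcal S$. (3) Let $\theta\in\mathbb{F}_{q^3}^*$ with $N(\theta)\neq1$. Then $\mu_{\mathrm{line}}(\Pi_\theta^{\phi^2})$ is a $T^{\phi^2}$-sls, and $\mu_{\mathrm{pt}}(\Pi_\theta^{\phi^2})$ is a pencil of lines $\{T^{\phi^2}X:X\in\mathcal S\}$ for some $T^{\phi^2}$-sls $\mathcal S$. (4) Let $\mathcal B$ be an $\mathbb{F}_q$-plane in $\mathrm{orb}(\mathsf S_T)$ all of whose lines have Type III, which is not a $T$-plane, a $T^\phi$-plane or a $T^{\phi^2}$-plane. Then $\mu_{\mathrm{line}}(\mathcal B)$ is the pointset of an $\mathbb{F}_q$-plane in $\mathrm{orb}(\mathsf S_T)$. (5) Let $\mathcal B$ be an $\mathbb{F}_q$-plane in $\mathrm{orb}(\mathsf S_T)$ all of whose points have Type III, which is not a $T$-plane, a $T^\phi$-plane or a $T^{\phi^2}$-plane. Then $\mu_{\mathrm{pt}}(\mathcal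 B)$ is the lineset of an $\mathbb{F}_q$-plane in $\mathrm{orb}(\mathsf S_T)$.
   Context: Let $q$ be a prime power, $\mathbb{F}_{q^3}^*=\mathbb{F}_{q^3}\setminus\{0\}$, $N(x)=x^{q^2+q+1}$. Points of $\mathrm{PG}(2,q^3)$ have homogeneous coordinates $(x,y,z)$ and lines $[a,b,c]$. An $\mathbb{F}_q$-plane is a subplane of order $q$; its lines are those meeting it in $q+1$ points. Let $\phi$ be the collineation $(x,y,z)\mapsto(z^q,x^q,y^q)$ (on lines $[d,e,f]\mapsto[f^q,d^q,e^q]$), with fixed points $\mathcal P_{2,q}=\{(x,x^q,x^{q^2}):x\in\mathbb{F}_{q^3}^*\}$. A point has Type I, II, III according as its $\phi$-orbit is one point, three collinear points, three non-collinear points; a line has Type I, II, III according as its $\phi$-orbit is one line, three concurrent lines, three non-concurrent lines. Let $\mu_{\mathrm{pt}}$ map a Type III point $P$ to the line $P^\phi P^{\phi^2}$ and $\mu_{\mathrm{line}}$ map a Type III line $\ell$ to the point $\ell^\phi\cap\ell^{\phi^2}$. For an $\mathbb{F}_q$-plane $\mathcal B$ with only Type III points, $\mu_{\mathrm{pt}}(\mathcal B)=\{\mu_{\mathrm{pt}}(P):P\in\mathcal B\}$; for one with only Type III lines, $\mu_{\mathrm{line}}(\mathcal B)=\{\mu_{\mathrm{line}}(\ell):\ell\text{ a line of }\mathcal B\}$. Let $T=(0,0,1)$, $T^\phi=(1,0,0)$, $T^{\phi^2}=(0,1,0)$. Let $\psi_t:(x,y,z)\mapsto(tx,t^qy,t^{q^2}z)$,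 $\mathsf S_T=\{\psi_t:t\in\mathbb{F}_{q^3}^*\}$, and $\mathrm{orb}(\mathsf S_T)$ the set of its point orbits. The orbits of size $q^2+q+1$ contained in the line $T^\phi T^{\phi^2}$ (resp. $T^{\phi^2}T$, $TT^\phi$) are called $T$-slses (resp. $T^\phi$-slses, $T^{\phi^2}$-slses). For $\theta\in\mathbb{F}_{q^3}^*$, $\mathcal S_\theta=\{(x\theta,x^q,0):x\in\mathbb{F}_{q^3}^*\}$ (these are the $T$-slses), and $T\mathcal S_\theta=\{TX:X\in\mathcal S_\theta\}$. For $\theta\in\mathbb{F}_{q^3}^*$, the $T$-plane $\Pi_\theta=\{(r\theta^{q+1},r^q,r^{q^2}\theta):r\in\mathbb{F}_{q^3}^*\}$ is an $\mathbb{F}_q$-plane in $\mathrm{orb}(\mathsf S_T)$; the sets $\Pi_\theta^\phi$ are called $T^\phi$-planes and the sets $\Pi_\theta^{\phi^2}$ are called $T^{\phi^2}$-planes. *)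

theory Defs
  imports Main "HOL-Computational_Algebra.Primes" "HOL-Library.Cardinality"
begin

(* Homogeneous coordinates of PG(2,F): nonzero triples. A point (and likewise a line)
   is represented by its class of nonzero scalar multiples. *)
type_synonym 'a tri = "'a \<times> 'a \<times> 'a"

definition cls :: "'a::field tri \<Rightarrow> 'a tri set" where
  "cls v = {(c * fst v, c * fst (snd v), c * snd (snd v)) | c. c \<noteq> 0}"

definition PG_points :: "'a::field tri set set" where
  "PG_points = {cls v | v. v \<noteq> (0,0,0)}"

definition PG_lines :: "'a::field tri set set" where
  "PG_lines = {cls v | v. v \<noteq> (0,0,0)}"

definition dot3 :: "'a::field tri \<Rightarrow> 'a tri \<Rightarrow> 'a" where
  "dot3 v w = fst v * fst w + fst (snd v) * fst (snd w) + snd (snd v) * snd (snd w)"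

definition incid :: "'a::field tri set \<Rightarrow> 'a tri set \<Rightarrow> bool" where
  "incid P l \<longleftrightarrow> P \<in> PG_points \<and> l \<in> PG_lines \<and> (\<exists>v\<in>P. \<exists>w\<in>l. dot3 v w = 0)"

definition frob_vec :: "nat \<Rightarrow> 'a::field tri \<Rightarrow> 'a tri" where
  "frob_vec q v = (snd (snd v) ^ q, fst v ^ q, fst (snd v) ^ q)"

definition phi :: "nat \<Rightarrow> 'a::field tri set \<Rightarrow> 'a tri set" where
  "phi q X = frob_vec q ` X"

definition collinear3 :: "'a::field tri set \<Rightarrow> 'a tri set \<Rightarrow> 'a tri set \<Rightarrow> bool" where
  "collinear3 P Q R \<longleftrightarrow> (\<exists>l\<in>PG_lines. incid P l \<and> incid Q l \<and> incid R l)"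

definition concurrent3 :: "'a::field tri set \<Rightarrow> 'a tri set \<Rightarrow> 'a tri set \<Rightarrow> bool" where
  "concurrent3 l m n \<longleftrightarrow> (\<exists>P\<in>PG_points. incid P l \<and> incid P m \<and> incid P n)"

definition typeIII_pt :: "nat \<Rightarrow> 'a::field tri set \<Rightarrow> bool" where
  "typeIII_pt q P \<longleftrightarrow> P \<in> PG_points \<and> \<not> collinear3 P (phi q P) (phi q (phi q P))"

definition typeIII_line :: "nat \<Rightarrow> 'a::field tri set \<Rightarrow> bool" where
  "typeIII_line q l \<longleftrightarrow> l \<in> PG_lines \<and> \<not> concurrent3 l (phi q l) (phi q (phi q l))"

definition join :: "'a::field tri set \<Rightarrow> 'a tri set \<Rightarrow> 'a tri set" where
  "join P Q = (THE l. l \<in> PG_lines \<and> incid P l \<and> incid Q l)"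

definition meet :: "'a::field tri set \<Rightarrow> 'a tri set \<Rightarrow> 'a tri set" where
  "meet l m = (THE P. P \<in> PG_points \<and> incid P l \<and> incid P m)"

definition mu_pt :: "nat \<Rightarrow> 'a::field tri set \<Rightarrow> 'a tri set" where
  "mu_pt q P = join (phi q P) (phi q (phi q P))"

definition mu_line :: "nat \<Rightarrow> 'a::field tri set \<Rightarrow> 'a tri set" where
  "mu_line q l = meet (phi q l) (phi q (phi q l))"

definition lines_of :: "nat \<Rightarrow> 'a::field tri set set \<Rightarrow> 'a tri set set" where
  "lines_of q B = {l \<in> PG_lines. card {P \<in> B. incid P l} = q + 1}"

(* B is (the point set of) a subplane of order q: with the lines meeting B in at least
   two points it is a projective plane whose lines carry q+1 points *)
definition is_Fq_plane :: "nat \<Rightarrow> 'a::field tri set set \<Rightarrow> bool" where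
  "is_Fq_plane q B \<longleftrightarrow>
     B \<subseteq> PG_points \<and>
     (\<forall>l\<in>PG_lines. card {P \<in> B. incid P l} \<ge> 2 \<longrightarrow> card {P \<in> B. incid P l} = q + 1) \<and>
     (\<forall>l\<in>lines_of q B. \<forall>m\<in>lines_of q B. l \<noteq> m \<longrightarrow> (\<exists>P\<in>B. incid P l \<and> incid P m)) \<and>
     (\<exists>P1\<in>B. \<exists>P2\<in>B. \<exists>P3\<in>B. \<exists>P4\<in>B.
        \<not> collinear3 P1 P2 P3 \<and> \<not> collinear3 P1 P2 P4 \<and>
        \<not> collinear3 P1 P3 P4 \<and> \<not> collinear3 P2 P3 P4)"

definition mu_line_set :: "nat \<Rightarrow> 'a::field tri set set \<Rightarrow> 'a tri set set" where
  "mu_line_set q B = mu_line q ` lines_of q B"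

definition mu_pt_set :: "nat \<Rightarrow> 'a::field tri set set \<Rightarrow> 'a tri set set" where
  "mu_pt_set q B = mu_pt q ` B"

definition Norm :: "nat \<Rightarrow> 'a::field \<Rightarrow> 'a" where
  "Norm q x = x ^ (q^2 + q + 1)"

definition psi_vec :: "nat \<Rightarrow> 'a::field \<Rightarrow> 'a tri \<Rightarrow> 'a tri" where
  "psi_vec q t v = (t * fst v, t ^ q * fst (snd v), t ^ (q^2) * snd (snd v))"

definition orbit_ST :: "nat \<Rightarrow> 'a::field tri set \<Rightarrow> 'a tri set set" where
  "orbit_ST q P = {psi_vec q t ` P | t. t \<noteq> 0}"

definition orb_ST :: "nat \<Rightarrow> 'a::field tri set set set" where
  "orb_ST q = {orbit_ST q P | P. P \<in> PG_points}"

definition ptT :: "'a::field tri set" where "ptT = cls (0,0,1)"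
definition ptTphi :: "'a::field tri set" where "ptTphi = cls (1,0,0)"
definition ptTphi2 :: "'a::field tri set" where "ptTphi2 = cls (0,1,0)"

definition sls_on :: "nat \<Rightarrow> 'a::field tri set \<Rightarrow> 'a tri set set \<Rightarrow> bool" where
  "sls_on q l S \<longleftrightarrow> S \<in> orb_ST q \<and> card S = q^2 + q + 1 \<and> (\<forall>P\<in>S. incid P l)"

definition T_sls :: "nat \<Rightarrow> 'a::field tri set set \<Rightarrow> bool" where
  "T_sls q S \<longleftrightarrow> sls_on q (join ptTphi ptTphi2) S"
definition Tphi_sls :: "nat \<Rightarrow> 'a::field tri set set \<Rightarrow> bool" where
  "Tphi_sls q S \<longleftrightarrow> sls_on q (join ptTphi2 ptT) S"
definition Tphi2_sls :: "nat \<Rightarrow> 'a::field tri set set \<Rightarrow> bool" where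
  "Tphi2_sls q S \<longleftrightarrow> sls_on q (join ptT ptTphi) S"

definition S_theta :: "nat \<Rightarrow> 'a::field \<Rightarrow> 'a tri set set" where
  "S_theta q \<theta> = {cls (x * \<theta>, x ^ q, 0) | x. x \<noteq> 0}"

definition pencil :: "'a::field tri set \<Rightarrow> 'a tri set set \<Rightarrow> 'a tri set set" where
  "pencil X S = {join X Y | Y. Y \<in> S}"

definition Pi_theta :: "nat \<Rightarrow> 'a::field \<Rightarrow> 'a tri set set" where
  "Pi_theta q \<theta> = {cls (r * \<theta> ^ (q + 1), r ^ q, r ^ (q^2) * \<theta>) | r. r \<noteq> 0}"

definition T_plane :: "nat \<Rightarrow> 'a::field tri set set \<Rightarrow> bool" where
  "T_plane q B \<longleftrightarrow> (\<exists>\<theta>. \<theta> \<noteq> 0 \<and> B = Pi_theta q \<theta>)"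
definition Tphi_plane :: "nat \<Rightarrow> 'a::field tri set set \<Rightarrow> bool" where
  "Tphi_plane q B \<longleftrightarrow> (\<exists>\<theta>. \<theta> \<noteq> 0 \<and> B = phi q ` Pi_theta q \<theta>)"
definition Tphi2_plane :: "nat \<Rightarrow> 'a::field tri set set \<Rightarrow> bool" where
  "Tphi2_plane q B \<longleftrightarrow> (\<exists>\<theta>. \<theta> \<noteq> 0 \<and> B = phi q ` phi q ` Pi_theta q \<theta>)"

definition prime_power :: "nat \<Rightarrow> bool" where
  "prime_power q \<longleftrightarrow> (\<exists>p k. prime p \<and> k \<ge> 1 \<and> q = p ^ k)"

end

theory Submission
  imports Defs "HOL-Number_Theory.Residues" "HOL-Computational_Algebra.Polynomial"
begin

(* Write F x = x ^ q. On coordinate vectors the collineation psi_t of S_T is the diagonal map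
   (a, b, c) |-> (t a, F t b, F (F t) c); it commutes with the Frobenius phi, and every member of
   orb(S_T) is the orbit of a single vector v. For such diagonal maps the cross product satisfies
   psi_t u x psi_t w = N(t) psi_(1/t) (u x w), so mu(v) = phi v x phi (phi v) transforms in the same way:
   mu maps the orbit of v onto the orbit of mu(v), and the Type III condition on the orbit becomes
   det (v, phi v, phi (phi v)) = v . mu(v) <> 0. If all coordinates of v are nonzero, its lines are
   the orbit of v' = (1/a, 1/b, 1/c): the map r |-> cls (psi_r v) is (q-1)-to-1, and the points on such
   a line correspond to the q^2 - 1 nonzero elements of the kernel of the trace. Since Pi_theta is the
   orbit of (theta F theta, 1, theta), the orbit of v is a T-, T^phi- or T^phi^2-plane exactly when a
   coordinate of mu(v) vanishes; otherwise mu(v) and mu(v') have nonzero coordinates as well, and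
   their orbits are subplanes again. *)

section \<open>The Frobenius map of a field of order \<open>q\<^sup>3\<close>\<close>

lemma finite_field_power_card:
  fixes x :: "'a::{finite,field}"
  shows "x ^ CARD('a) = x"
proof (cases "x = 0")
  case True
  then show ?thesis
    using finite_UNIV_card_ge_0[where ?'a = 'a] by simp
next
  case False
  let ?U = "UNIV - {0::'a}"
  have "bij_betw (\<lambda>y. x * y) ?U ?U"
    using False by (intro bij_betwI[where g = "\<lambda>y. y / x"]) auto
  then have "\<Prod>?U = (\<Prod>y\<in>?U. x * y)"
    using prod.reindex_bij_betw[of "\<lambda>y. x * y" ?U ?U id] by simp
  also have "\<dots> = x ^ card ?U * \<Prod>?U"
    by (simp add: prod.distrib)
  finally have "\<Prod>?U = x ^ card ?U * \<Prod>?U" .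
  moreover have "\<Prod>?U \<noteq> 0"
    by simp
  ultimately have "x ^ card ?U = 1"
    by (metis mult_cancel_right1)
  moreover have "CARD('a) = Suc (card ?U)"
    using finite_UNIV_card_ge_0[where ?'a = 'a] by (simp add: card_Diff_singleton)
  ultimately show ?thesis
    by (metis power_Suc mult_1_right)
qed

lemma CHAR_eq_prime_of_card:
  assumes "prime p" and "CARD('a::{finite,field}) = p ^ n"
  shows "CHAR('a) = p"
proof -
  have "prime CHAR('a)"
    by (intro prime_CHAR_semidom finite_imp_CHAR_pos) simp
  moreover have "CHAR('a) dvd p ^ n"
    using CHAR_dvd_CARD[where ?'a = 'a] assms(2) by simp
  ultimately show ?thesis
    using assms(1) prime_dvd_power primes_dvd_imp_eq by blast
qed

lemma card_eq_card_image_mult: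
  assumes "finite A" and "\<And>b. b \<in> g ` A \<Longrightarrow> card {x\<in>A. g x = b} = k"
  shows "card A = card (g ` A) * k"
proof -
  have "card A = card (\<Union>b\<in>g ` A. {x\<in>A. g x = b})"
    by (rule arg_cong[where f = card]) auto
  also have "\<dots> = (\<Sum>b\<in>g ` A. card {x\<in>A. g x = b})"
    using assms(1) by (intro card_UN_disjoint) auto
  also have "\<dots> = card (g ` A) * k"
    using assms(2) by simp
  finally show ?thesis .
qed

lemma card_UNIV_additive:
  fixes h :: "'a::{finite,ab_group_add} \<Rightarrow> 'b::ab_group_add"
  assumes h_add: "\<And>x y. h (x + y) = h x + h y"
  shows "CARD('a) = card (range h) * card {x. h x = 0}"
proof (rule card_eq_card_image_mult)
  fix b
  assume "b \<in> range h"
  then obtain y where y: "h y = b"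
    by auto
  have h_diff: "h (x - y) = h x - h y" for x y
    using h_add[of "x - y" y] by (simp add: algebra_simps)
  have "{x \<in> UNIV. h x = b} = (+) y ` {x. h x = 0}"
  proof (intro equalityI subsetI)
    fix x
    assume "x \<in> {x \<in> UNIV. h x = b}"
    then have "h (x - y) = 0" and "x = y + (x - y)"
      using y h_diff by auto
    then show "x \<in> (+) y ` {x. h x = 0}"
      by blast
  qed (use y h_add in auto)
  also have "card \<dots> = card {x. h x = 0}"
    by (simp add: card_image)
  finally show "card {x \<in> UNIV. h x = b} = card {x. h x = 0}" .
qed simp

locale cubic_extension =
  fixes q :: nat and F :: "'a::{finite,field} \<Rightarrow> 'a"
  assumes prime_power_q: "prime_power q"
    and card_field: "CARD('a) = q ^ 3"
    and F_def: "F x = x ^ q"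
begin

lemma q_ge_2: "q \<ge> 2"
proof -
  obtain p k where "prime p" "k \<ge> 1" "q = p ^ k"
    using prime_power_q unfolding prime_power_def by blast
  then show ?thesis
    using prime_ge_2_nat[of p] self_le_power[of p k] by simp
qed

lemma F_add: "F (x + y) = F x + F y"
proof -
  obtain p k where p: "prime p" and q: "q = p ^ k"
    using prime_power_q unfolding prime_power_def by blast
  have "CHAR('a) = p"
    using p card_field q by (intro CHAR_eq_prime_of_card) (simp_all add: power_mult[symmetric])
  then show ?thesis
    unfolding F_def using p q by (intro freshmans_dream') simp_all
qed

lemma F_F_F [simp]: "F (F (F x)) = x"
proof -
  have "F (F (F x)) = x ^ CARD('a)"
    by (simp add: F_def card_field power3_eq_cube flip: power_mult)
  then show ?thesis
    by (simp add: finite_field_power_card)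
qed

lemma F_F: "F (F x) = x ^ q\<^sup>2"
  by (simp add: F_def power2_eq_square power_mult)

lemma F_0 [simp]: "F 0 = 0"
  using q_ge_2 by (simp add: F_def)

lemma F_1 [simp]: "F 1 = 1"
  by (simp add: F_def)

lemma F_mult: "F (x * y) = F x * F y"
  by (simp add: F_def power_mult_distrib)

lemma F_minus: "F (- x) = - F x"
  using F_add[of x "- x"] by (simp add: eq_neg_iff_add_eq_0 add.commute)

lemma F_diff: "F (x - y) = F x - F y"
  using F_add[of "x - y" y] by simp

lemma F_eq_iff [simp]: "F x = F y \<longleftrightarrow> x = y"
  by (metis F_F_F)

lemma F_eq_0_iff [simp]: "F x = 0 \<longleftrightarrow> x = 0"
  using F_eq_iff[of x 0] by simp

lemma F_inverse: "F (inverse x) = inverse (F x)"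
  by (simp add: F_def power_inverse)

lemma F_divide: "F (x / y) = F x / F y"
  by (simp add: divide_inverse F_mult F_inverse)

lemmas F_field_simps = F_add F_mult F_minus F_diff F_inverse F_divide

lemma Norm_eq: "Norm q x = x * F x * F (F x)"
  unfolding Norm_def F_def by (simp add: power_add power_mult power2_eq_square mult_ac)

definition tr :: "'a \<Rightarrow> 'a" where
  "tr x = x + F x + F (F x)"

lemma tr_0 [simp]: "tr 0 = 0"
  by (simp add: tr_def)

lemma tr_add: "tr (x + y) = tr x + tr y"
  by (simp add: tr_def F_add)

lemma tr_mult_fixed: "F k = k \<Longrightarrow> tr (k * x) = k * tr x"
  by (simp add: tr_def F_mult algebra_simps)

lemma card_fixed_F_le: "card {x. F x = x} \<le> q"
proof -
  let ?p = "monom (1::'a) q - monom 1 1"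
  have "coeff ?p q = 1"
    using q_ge_2 by (simp add: coeff_monom)
  then have "?p \<noteq> 0"
    by (metis coeff_0 zero_neq_one)
  moreover have "degree ?p \<le> q"
    using q_ge_2 by (intro degree_diff_le) (auto simp: degree_monom_eq)
  moreover have "{x. F x = x} = {x. poly ?p x = 0}"
    by (auto simp: F_def poly_monom)
  ultimately show ?thesis
    using card_poly_roots_bound[of ?p] by simp
qed

lemma card_tr_kernel_le: "card {x. tr x = 0} \<le> q\<^sup>2"
proof -
  let ?p = "monom (1::'a) (q\<^sup>2) + monom 1 q + monom 1 1"
  have "q < q\<^sup>2"
    using q_ge_2 by (simp add: power2_eq_square)
  then have "coeff ?p (q\<^sup>2) = 1"
    using q_ge_2 by (simp add: coeff_monom)
  then have "?p \<noteq> 0"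
    by (metis coeff_0 zero_neq_one)
  moreover have "degree ?p \<le> q\<^sup>2"
    using \<open>q < q\<^sup>2\<close> by (intro degree_add_le) (auto simp: degree_monom_eq)
  moreover have "{x. tr x = 0} = {x. poly ?p x = 0}"
    unfolding tr_def F_F by (simp add: F_def poly_monom add_ac)
  ultimately show ?thesis
    using card_poly_roots_bound[of ?p] by simp
qed

(* Both bounds are sharp: x |-> F x - x maps into the kernel of the trace and the trace maps into
   the fixed field, so the two counts multiply to at least q^3. *)

lemma card_fixed_F: "card {x. F x = x} = q"
  and card_tr_kernel: "card {x. tr x = 0} = q\<^sup>2"
proof -
  have range_diff: "range (\<lambda>x. F x - x) \<subseteq> {x. tr x = 0}"
    by (auto simp: tr_def F_diff)
  have range_tr: "range tr \<subseteq> {x. F x = x}"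
    by (auto simp: tr_def F_add)
  have "F (x + y) - (x + y) = (F x - x) + (F y - y)" for x y
    by (simp add: F_add)
  then have "q ^ 3 = card (range (\<lambda>x. F x - x)) * card {x. F x = x}"
    using card_UNIV_additive[of "\<lambda>x. F x - x"] by (simp add: card_field)
  also have "\<dots> \<le> q\<^sup>2 * card {x. F x = x}"
    using card_mono[OF _ range_diff] card_tr_kernel_le by simp
  finally have "q \<le> card {x. F x = x}"
    using q_ge_2 by (simp add: power3_eq_cube power2_eq_square)
  then show "card {x. F x = x} = q"
    using card_fixed_F_le by simp
  have "q ^ 3 = card (range tr) * card {x. tr x = 0}"
    using card_UNIV_additive[of tr, OF tr_add] by (simp add: card_field)
  also have "\<dots> \<le> q * card {x. tr x = 0}"
    using card_mono[OF _ range_tr] card_fixed_F_le by simp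
  finally have "q\<^sup>2 \<le> card {x. tr x = 0}"
    using q_ge_2 by (simp add: power3_eq_cube power2_eq_square)
  then show "card {x. tr x = 0} = q\<^sup>2"
    using card_tr_kernel_le by simp
qed

end

section \<open>Homogeneous coordinates\<close>

definition smult3 :: "'a::field \<Rightarrow> 'a tri \<Rightarrow> 'a tri" where
  "smult3 k v = (k * fst v, k * fst (snd v), k * snd (snd v))"

definition cross :: "'a::field tri \<Rightarrow> 'a tri \<Rightarrow> 'a tri" where
  "cross v w = (fst (snd v) * snd (snd w) - snd (snd v) * fst (snd w),
                snd (snd v) * fst w - fst v * snd (snd w),
                fst v * fst (snd w) - fst (snd v) * fst w)"

definition det3 :: "'a::field tri \<Rightarrow> 'a tri \<Rightarrow> 'a tri \<Rightarrow> 'a" where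
  "det3 u v w = dot3 u (cross v w)"

lemma smult3_simp [simp]: "smult3 k (a, b, c) = (k * a, k * b, k * c)"
  by (simp add: smult3_def)

lemma cross_simp [simp]: "cross (a, b, c) (d, e, f) = (b * f - c * e, c * d - a * f, a * e - b * d)"
  by (simp add: cross_def)

lemma dot3_simp [simp]: "dot3 (a, b, c) (d, e, f) = a * d + b * e + c * f"
  by (simp add: dot3_def)

lemma dot3_commute: "dot3 v w = dot3 w v"
  by (simp add: dot3_def mult.commute)

lemma dot3_smult3: "dot3 (smult3 k v) w = k * dot3 v w" "dot3 v (smult3 k w) = k * dot3 v w"
  by (auto simp: dot3_def smult3_def algebra_simps)

lemma smult3_smult3: "smult3 c (smult3 k v) = smult3 (c * k) v"
  by (simp add: smult3_def mult.assoc)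

lemma smult3_eq_0_iff: "smult3 k v = (0, 0, 0) \<longleftrightarrow> k = 0 \<or> v = (0, 0, 0)"
  by (cases v) auto

lemma dot3_cross: "dot3 v (cross v w) = 0" "dot3 w (cross v w) = 0"
  by (cases v; cases w; simp add: algebra_simps)+

lemma cross_smult3_self: "cross v (smult3 k v) = (0, 0, 0)"
  by (cases v) (simp add: algebra_simps)

lemma cross_0_left [simp]: "cross (0, 0, 0) w = (0, 0, 0)"
  and cross_0_right [simp]: "cross v (0, 0, 0) = (0, 0, 0)"
  by (cases w, simp, cases v, simp)

lemma cross_cross_eq_0:
  assumes "dot3 u w = 0" and "dot3 v w = 0"
  shows "cross (cross u v) w = (0, 0, 0)"
proof -
  obtain a b c d e f x y z where "u = (a, b, c)" "v = (d, e, f)" "w = (x, y, z)"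
    by (cases u, cases v, cases w)
  moreover have "cross (cross (a, b, c) (d, e, f)) (x, y, z) =
      ((a * x + b * y + c * z) * d - (d * x + e * y + f * z) * a,
       (a * x + b * y + c * z) * e - (d * x + e * y + f * z) * b,
       (a * x + b * y + c * z) * f - (d * x + e * y + f * z) * c)"
    by (simp add: algebra_simps)
  ultimately show ?thesis
    using assms by simp
qed

lemma cross_eq_0_iff:
  assumes "v \<noteq> (0, 0, 0)"
  shows "cross v w = (0, 0, 0) \<longleftrightarrow> (\<exists>k. w = smult3 k v)"
proof
  assume cross: "cross v w = (0, 0, 0)"
  obtain a b c d e f where v: "v = (a, b, c)" and w: "w = (d, e, f)"
    by (cases v, cases w)
  have eqs: "b * f = c * e" "c * d = a * f" "a * e = b * d"
    using cross v w by auto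
  consider "a \<noteq> 0" | "a = 0" "b \<noteq> 0" | "a = 0" "b = 0" "c \<noteq> 0"
    using assms v by auto
  then show "\<exists>k. w = smult3 k v"
  proof cases
    case 1
    then have "w = smult3 (d / a) v"
      using eqs v w by (simp add: divide_eq_eq eq_divide_eq mult.commute)
    then show ?thesis ..
  next
    case 2
    then have "w = smult3 (e / b) v"
      using eqs v w by (simp add: divide_eq_eq eq_divide_eq mult.commute)
    then show ?thesis ..
  next
    case 3
    then have "w = smult3 (f / c) v"
      using eqs v w by (simp add: divide_eq_eq eq_divide_eq mult.commute)
    then show ?thesis ..
  qed
qed (auto simp: cross_smult3_self)

lemma mem_cls_iff: "w \<in> cls v \<longleftrightarrow> (\<exists>k. k \<noteq> 0 \<and> w = smult3 k v)"
  by (auto simp: cls_def smult3_def)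

lemma self_mem_cls: "v \<in> cls v"
  unfolding mem_cls_iff by (rule exI[of _ 1]) (simp add: smult3_def)

lemma cls_smult3:
  assumes "k \<noteq> 0"
  shows "cls (smult3 k v) = cls v"
proof (rule Set.set_eqI, rule iffI)
  fix w
  assume "w \<in> cls (smult3 k v)"
  then obtain c where "c \<noteq> 0" "w = smult3 (c * k) v"
    by (auto simp: mem_cls_iff smult3_smult3)
  then show "w \<in> cls v"
    using assms unfolding mem_cls_iff by (intro exI[of _ "c * k"]) simp
next
  fix w
  assume "w \<in> cls v"
  then obtain c where "c \<noteq> 0" "w = smult3 (c / k) (smult3 k v)"
    using assms by (auto simp: mem_cls_iff smult3_smult3)
  then show "w \<in> cls (smult3 k v)"
    using assms unfolding mem_cls_iff by (intro exI[of _ "c / k"]) simp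
qed

lemma cls_eqD: "cls v = cls w \<Longrightarrow> \<exists>k. k \<noteq> 0 \<and> w = smult3 k v"
  using self_mem_cls[of w] mem_cls_iff by blast

lemma cls_eq_iff_cross:
  assumes "v \<noteq> (0, 0, 0)" and "w \<noteq> (0, 0, 0)"
  shows "cls v = cls w \<longleftrightarrow> cross v w = (0, 0, 0)"
proof
  assume "cls v = cls w"
  then show "cross v w = (0, 0, 0)"
    using cls_eqD cross_smult3_self by blast
next
  assume "cross v w = (0, 0, 0)"
  then obtain k where "w = smult3 k v"
    using assms(1) cross_eq_0_iff by blast
  moreover from this have "k \<noteq> 0"
    using assms(2) by (auto simp: smult3_eq_0_iff)
  ultimately show "cls v = cls w"
    by (simp add: cls_smult3)
qed

lemma PG_lines_eq_PG_points: "PG_lines = PG_points"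
  by (simp add: PG_lines_def PG_points_def)

lemma PG_points_iff: "P \<in> PG_points \<longleftrightarrow> (\<exists>v. v \<noteq> (0, 0, 0) \<and> P = cls v)"
  unfolding PG_points_def by blast

lemma cls_in_PG_points: "v \<noteq> (0, 0, 0) \<Longrightarrow> cls v \<in> PG_points"
  unfolding PG_points_iff by blast

lemma incid_cls_iff:
  assumes "v \<noteq> (0, 0, 0)" and "w \<noteq> (0, 0, 0)"
  shows "incid (cls v) (cls w) \<longleftrightarrow> dot3 v w = 0"
proof
  assume "incid (cls v) (cls w)"
  then obtain v' w' where "v' \<in> cls v" "w' \<in> cls w" "dot3 v' w' = 0"
    unfolding incid_def by blast
  moreover obtain k l where "k \<noteq> 0" "l \<noteq> 0" "v' = smult3 k v" "w' = smult3 l w"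
    using calculation(1,2) unfolding mem_cls_iff by blast
  ultimately show "dot3 v w = 0"
    by (simp add: dot3_smult3)
next
  assume "dot3 v w = 0"
  moreover have "cls v \<in> PG_points" "cls w \<in> PG_lines"
    using assms by (simp_all add: cls_in_PG_points PG_lines_eq_PG_points)
  ultimately show "incid (cls v) (cls w)"
    unfolding incid_def using self_mem_cls by blast
qed

lemma incid_commute: "incid P l \<longleftrightarrow> incid l P"
proof -
  have "(\<exists>v\<in>P. \<exists>w\<in>l. dot3 v w = 0) \<longleftrightarrow> (\<exists>v\<in>l. \<exists>w\<in>P. dot3 v w = 0)"
    by (metis dot3_commute)
  then show ?thesis
    unfolding incid_def PG_lines_eq_PG_points by blast
qed

lemma perp_both_imp_smult3_cross:
  assumes "cross v w \<noteq> (0, 0, 0)" and "dot3 v l = 0" and "dot3 w l = 0"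
  shows "\<exists>k. l = smult3 k (cross v w)"
proof -
  have "cross (cross v w) l = (0, 0, 0)"
    using assms(2,3) by (rule cross_cross_eq_0)
  then show ?thesis
    using assms(1) cross_eq_0_iff by blast
qed

lemma cls_eq_cls_cross:
  assumes "cross v w \<noteq> (0, 0, 0)" and "l \<noteq> (0, 0, 0)" and "dot3 v l = 0" and "dot3 w l = 0"
  shows "cls l = cls (cross v w)"
proof -
  obtain k where "l = smult3 k (cross v w)"
    using perp_both_imp_smult3_cross[OF assms(1,3,4)] by blast
  moreover from this have "k \<noteq> 0"
    using assms(2) by (auto simp: smult3_eq_0_iff)
  ultimately show ?thesis
    by (simp add: cls_smult3)
qed

(* Residues imports HOL-Algebra, whose Lattice.join and Lattice.meet shadow those of Defs. *)

lemma join_cls: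
  assumes "cross v w \<noteq> (0, 0, 0)"
  shows "Defs.join (cls v) (cls w) = cls (cross v w)"
  unfolding Defs.join_def
proof (rule the_equality)
  have "v \<noteq> (0, 0, 0)" "w \<noteq> (0, 0, 0)"
    using assms by auto
  then show "cls (cross v w) \<in> PG_lines \<and> incid (cls v) (cls (cross v w)) \<and> incid (cls w) (cls (cross v w))"
    using assms by (simp add: PG_lines_eq_PG_points cls_in_PG_points incid_cls_iff dot3_cross)
  fix l
  assume l: "l \<in> PG_lines \<and> incid (cls v) l \<and> incid (cls w) l"
  then obtain u where u: "u \<noteq> (0, 0, 0)" "l = cls u"
    by (auto simp: PG_lines_eq_PG_points PG_points_iff)
  then have "dot3 v u = 0" "dot3 w u = 0"
    using l \<open>v \<noteq> (0, 0, 0)\<close> \<open>w \<noteq> (0, 0, 0)\<close> by (simp_all add: incid_cls_iff)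
  then show "l = cls (cross v w)"
    using cls_eq_cls_cross[OF assms u(1)] u(2) by simp
qed

(* Points and lines share their coordinates and incidence is symmetric, so each dual notion
   coincides with the original one. *)

lemma concurrent3_iff_collinear3: "concurrent3 l m n \<longleftrightarrow> collinear3 l m n"
  unfolding concurrent3_def collinear3_def PG_lines_eq_PG_points incid_commute[of _ l]
    incid_commute[of _ m] incid_commute[of _ n] ..

lemma meet_eq_join: "Defs.meet = Defs.join"
  unfolding Defs.meet_def Defs.join_def PG_lines_eq_PG_points fun_eq_iff
  by (simp add: incid_commute)

lemma mu_line_eq_mu_pt: "mu_line q = mu_pt q"
  by (simp add: fun_eq_iff mu_line_def mu_pt_def meet_eq_join)

lemma typeIII_line_iff_typeIII_pt: "typeIII_line q l \<longleftrightarrow> typeIII_pt q l"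
  by (simp add: typeIII_line_def typeIII_pt_def concurrent3_iff_collinear3 PG_lines_eq_PG_points)

lemma ex_perp_vector: "\<exists>u. u \<noteq> (0, 0, 0) \<and> dot3 v u = 0"
proof -
  obtain a b c where v: "v = (a, b, c)"
    by (cases v)
  show ?thesis
  proof (cases "a = 0 \<and> b = 0")
    case True
    then show ?thesis
      using v by (intro exI[of _ "(1, 0, 0)"]) simp
  next
    case False
    then show ?thesis
      using v by (intro exI[of _ "(b, - a, 0)"]) (auto simp: mult.commute)
  qed
qed

lemma ex_common_perp_iff_det3:
  assumes "a \<noteq> (0, 0, 0)" and "b \<noteq> (0, 0, 0)"
  shows "(\<exists>u. u \<noteq> (0, 0, 0) \<and> dot3 a u = 0 \<and> dot3 b u = 0 \<and> dot3 c u = 0) \<longleftrightarrow> det3 a b c = 0"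
proof
  assume "\<exists>u. u \<noteq> (0, 0, 0) \<and> dot3 a u = 0 \<and> dot3 b u = 0 \<and> dot3 c u = 0"
  then obtain u where u: "u \<noteq> (0, 0, 0)" "dot3 a u = 0" "dot3 b u = 0" "dot3 c u = 0"
    by blast
  show "det3 a b c = 0"
  proof (cases "cross b c = (0, 0, 0)")
    case False
    then obtain k where "u = smult3 k (cross b c)"
      using perp_both_imp_smult3_cross u by blast
    moreover from this have "k \<noteq> 0"
      using u(1) by (auto simp: smult3_eq_0_iff)
    ultimately show ?thesis
      using u(2) by (simp add: det3_def dot3_smult3)
  qed (simp add: det3_def dot3_def)
next
  assume det: "det3 a b c = 0"
  show "\<exists>u. u \<noteq> (0, 0, 0) \<and> dot3 a u = 0 \<and> dot3 b u = 0 \<and> dot3 c u = 0"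
  proof (cases "cross b c = (0, 0, 0)")
    case False
    then show ?thesis
      using det by (intro exI[of _ "cross b c"]) (simp add: det3_def dot3_cross)
  next
    case True
    then obtain k where c: "c = smult3 k b"
      using assms(2) cross_eq_0_iff by blast
    show ?thesis
    proof (cases "cross a b = (0, 0, 0)")
      case False
      then show ?thesis
        using c by (intro exI[of _ "cross a b"]) (simp add: dot3_cross dot3_smult3)
    next
      case True
      then obtain k' where "b = smult3 k' a"
        using assms(1) cross_eq_0_iff by blast
      then show ?thesis
        using c ex_perp_vector[of a] by (auto simp: dot3_smult3)
    qed
  qed
qed

lemma collinear3_cls_iff:
  assumes "a \<noteq> (0, 0, 0)" and "b \<noteq> (0, 0, 0)" and "c \<noteq> (0, 0, 0)"
  shows "collinear3 (cls a) (cls b) (cls c) \<longleftrightarrow> det3 a b c = 0"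
proof -
  have "collinear3 (cls a) (cls b) (cls c) \<longleftrightarrow>
      (\<exists>u. u \<noteq> (0, 0, 0) \<and> dot3 a u = 0 \<and> dot3 b u = 0 \<and> dot3 c u = 0)"
  proof
    assume "collinear3 (cls a) (cls b) (cls c)"
    then obtain l where l: "l \<in> PG_points" "incid (cls a) l" "incid (cls b) l" "incid (cls c) l"
      unfolding collinear3_def PG_lines_eq_PG_points by blast
    then obtain u where u: "u \<noteq> (0, 0, 0)" "l = cls u"
      unfolding PG_points_iff by blast
    then have "dot3 a u = 0" "dot3 b u = 0" "dot3 c u = 0"
      using l assms by (simp_all add: incid_cls_iff)
    then show "\<exists>u. u \<noteq> (0, 0, 0) \<and> dot3 a u = 0 \<and> dot3 b u = 0 \<and> dot3 c u = 0"
      using u(1) by blast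
  next
    assume "\<exists>u. u \<noteq> (0, 0, 0) \<and> dot3 a u = 0 \<and> dot3 b u = 0 \<and> dot3 c u = 0"
    then obtain u where "u \<noteq> (0, 0, 0)" "dot3 a u = 0" "dot3 b u = 0" "dot3 c u = 0"
      by blast
    then show "collinear3 (cls a) (cls b) (cls c)"
      unfolding collinear3_def PG_lines_eq_PG_points
      using assms by (auto simp: incid_cls_iff intro!: bexI[of _ "cls u"] cls_in_PG_points)
  qed
  then show ?thesis
    using ex_common_perp_iff_det3[OF assms(1,2)] by simp
qed

lemma line_through_two_points_unique:
  assumes "P \<in> PG_points" and "Q \<in> PG_points" and "P \<noteq> Q"
    and "incid P l" and "incid Q l" and "incid P m" and "incid Q m"
  shows "l = m"
proof -
  obtain v w where v: "v \<noteq> (0, 0, 0)" "P = cls v" and w: "w \<noteq> (0, 0, 0)" "Q = cls w"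
    using assms(1,2) unfolding PG_points_iff by blast
  have vw: "cross v w \<noteq> (0, 0, 0)"
    using cls_eq_iff_cross[OF v(1) w(1)] v(2) w(2) assms(3) by blast
  have "l = cls (cross v w)" if "incid P l" "incid Q l" for l
  proof -
    have "l \<in> PG_points"
      using that(1) by (simp add: incid_def PG_lines_eq_PG_points)
    then obtain u where u: "u \<noteq> (0, 0, 0)" "l = cls u"
      unfolding PG_points_iff by blast
    then have "dot3 v u = 0" "dot3 w u = 0"
      using that v w by (simp_all add: incid_cls_iff)
    then show ?thesis
      using cls_eq_cls_cross[OF vw u(1)] u(2) by simp
  qed
  then show ?thesis
    using assms(4-7) by metis
qed

lemma line_through_two_points:
  assumes "P \<in> PG_points" and "Q \<in> PG_points" and "P \<noteq> Q"
  shows "\<exists>l\<in>PG_lines. incid P l \<and> incid Q l"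
proof -
  obtain v w where v: "v \<noteq> (0, 0, 0)" "P = cls v" and w: "w \<noteq> (0, 0, 0)" "Q = cls w"
    using assms(1,2) unfolding PG_points_iff by blast
  have "cross v w \<noteq> (0, 0, 0)"
    using cls_eq_iff_cross[OF v(1) w(1)] v(2) w(2) assms(3) by blast
  then have "cls (cross v w) \<in> PG_lines" "incid P (cls (cross v w))" "incid Q (cls (cross v w))"
    using v w by (simp_all add: PG_lines_eq_PG_points cls_in_PG_points incid_cls_iff dot3_cross)
  then show ?thesis
    by blast
qed

lemma not_collinear3_off_line:
  assumes "P \<in> PG_points" and "Q \<in> PG_points" and "P \<noteq> Q"
    and "incid P l" and "incid Q l" and "\<not> incid R l"
  shows "\<not> collinear3 P Q R"
  using line_through_two_points_unique[OF assms(1-3)] assms(4-6) unfolding collinear3_def by metis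

lemma exists_two_elements:
  assumes "2 \<le> card S"
  obtains x y where "x \<in> S" and "y \<in> S" and "x \<noteq> y"
proof -
  have "finite S"
    using assms card.infinite by fastforce
  then show ?thesis
    using assms that card_le_Suc0_iff_eq by (metis not_less_eq_eq numeral_2_eq_2)
qed

lemma exists_outside_three_subsets:
  assumes "finite B" and "A1 \<subseteq> B" and "A2 \<subseteq> B" and "A3 \<subseteq> B"
    and "card A1 \<le> n" and "card A2 \<le> n" and "card A3 \<le> n" and "3 * n < card B"
  obtains x where "x \<in> B" and "x \<notin> A1" and "x \<notin> A2" and "x \<notin> A3"
proof -
  have "card (A1 \<union> A2 \<union> A3) \<le> card A1 + card A2 + card A3"
    by (rule order.trans[OF card_Un_le add_right_mono[OF card_Un_le]])
  then have "card (A1 \<union> A2 \<union> A3) < card B"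
    using assms(5-8) by linarith
  moreover have "A1 \<union> A2 \<union> A3 \<subseteq> B"
    using assms(2-4) by blast
  ultimately have "\<not> B \<subseteq> A1 \<union> A2 \<union> A3"
    using subset_antisym by fastforce
  then show ?thesis
    using that by blast
qed

lemma exists_quadrangle:
  assumes B: "B \<subseteq> PG_points" "finite B" and n: "1 \<le> n" "3 * n < card B"
    and lines: "\<And>P Q. P \<in> B \<Longrightarrow> Q \<in> B \<Longrightarrow> P \<noteq> Q \<Longrightarrow>
      \<exists>l. incid P l \<and> incid Q l \<and> card {R \<in> B. incid R l} = n + 1"
  shows "\<exists>P1\<in>B. \<exists>P2\<in>B. \<exists>P3\<in>B. \<exists>P4\<in>B.
    \<not> collinear3 P1 P2 P3 \<and> \<not> collinear3 P1 P2 P4 \<and> \<not> collinear3 P1 P3 P4 \<and> \<not> collinear3 P2 P3 P4"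
proof -
  let ?on = "\<lambda>l. {R \<in> B. incid R l}"
  have "2 \<le> card B"
    using n by linarith
  then obtain P1 P2 where P12: "P1 \<in> B" "P2 \<in> B" "P1 \<noteq> P2"
    by (rule exists_two_elements)
  obtain l12 where l12: "incid P1 l12" "incid P2 l12" "card (?on l12) = n + 1"
    using lines[OF P12] by blast
  have "\<not> B \<subseteq> ?on l12"
  proof
    assume "B \<subseteq> ?on l12"
    then have "?on l12 = B"
      by blast
    then show False
      using l12(3) n by simp
  qed
  then obtain P3 where P3: "P3 \<in> B" "\<not> incid P3 l12"
    by blast
  then have "P1 \<noteq> P3" "P2 \<noteq> P3"
    using l12 by auto
  obtain l13 where l13: "incid P1 l13" "incid P3 l13" "card (?on l13) = n + 1"
    using lines[OF P12(1) P3(1) \<open>P1 \<noteq> P3\<close>] by blast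
  obtain l23 where l23: "incid P2 l23" "incid P3 l23" "card (?on l23) = n + 1"
    using lines[OF P12(2) P3(1) \<open>P2 \<noteq> P3\<close>] by blast
  obtain P4 where P4: "P4 \<in> B" "P4 \<notin> ?on l12 - {P1}" "P4 \<notin> ?on l13 - {P3}" "P4 \<notin> ?on l23 - {P2}"
  proof (rule exists_outside_three_subsets[OF B(2) _ _ _ _ _ _ n(2)])
    show "card (?on l12 - {P1}) \<le> n" "card (?on l13 - {P3}) \<le> n" "card (?on l23 - {P2}) \<le> n"
      using card_Diff_singleton[of P1 "?on l12"] card_Diff_singleton[of P3 "?on l13"]
        card_Diff_singleton[of P2 "?on l23"] P12 P3(1) l12 l13 l23 by simp_all
  qed auto
  have "P4 \<noteq> P1" "P4 \<noteq> P2" "P4 \<noteq> P3"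
    using P4 P12 P3 l12 l13 l23 \<open>P1 \<noteq> P3\<close> \<open>P2 \<noteq> P3\<close> by auto
  then have "\<not> incid P4 l12" "\<not> incid P4 l13" "\<not> incid P4 l23"
    using P4 by auto
  moreover have pts: "P1 \<in> PG_points" "P2 \<in> PG_points" "P3 \<in> PG_points"
    using B(1) P12 P3 by auto
  ultimately have "\<not> collinear3 P1 P2 P3" "\<not> collinear3 P1 P2 P4"
    "\<not> collinear3 P1 P3 P4" "\<not> collinear3 P2 P3 P4"
    using not_collinear3_off_line[OF pts(1,2) P12(3) l12(1,2)]
      not_collinear3_off_line[OF pts(1,3) \<open>P1 \<noteq> P3\<close> l13(1,2)]
      not_collinear3_off_line[OF pts(2,3) \<open>P2 \<noteq> P3\<close> l23(1,2)] P3(2)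
    by auto
  then show ?thesis
    using P12 P3(1) P4(1) by blast
qed

definition inverse3 :: "'a::field tri \<Rightarrow> 'a tri" where
  "inverse3 v = (1 / fst v, 1 / fst (snd v), 1 / snd (snd v))"

definition all_coords_nonzero :: "'a::field tri \<Rightarrow> bool" where
  "all_coords_nonzero v \<longleftrightarrow> fst v \<noteq> 0 \<and> fst (snd v) \<noteq> 0 \<and> snd (snd v) \<noteq> 0"

lemma inverse3_simp [simp]: "inverse3 (a, b, c) = (1 / a, 1 / b, 1 / c)"
  by (simp add: inverse3_def)

lemma all_coords_nonzero_simp [simp]: "all_coords_nonzero (a, b, c) \<longleftrightarrow> a \<noteq> 0 \<and> b \<noteq> 0 \<and> c \<noteq> 0"
  by (simp add: all_coords_nonzero_def)

lemma all_coords_nonzero_inverse3: "all_coords_nonzero v \<Longrightarrow> all_coords_nonzero (inverse3 v)"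
  by (cases v) simp

lemma inverse3_inverse3: "all_coords_nonzero v \<Longrightarrow> inverse3 (inverse3 v) = v"
  by (cases v) simp

lemma all_coords_nonzero_imp_nonzero: "all_coords_nonzero v \<Longrightarrow> v \<noteq> (0, 0, 0)"
  by auto

definition two_coords_nonzero :: "'a::field tri \<Rightarrow> bool" where
  "two_coords_nonzero v \<longleftrightarrow>
    (fst v \<noteq> 0 \<and> fst (snd v) \<noteq> 0) \<or> (fst (snd v) \<noteq> 0 \<and> snd (snd v) \<noteq> 0) \<or>
    (fst v \<noteq> 0 \<and> snd (snd v) \<noteq> 0)"

lemma two_coords_nonzero_simp [simp]:
  "two_coords_nonzero (a, b, c) \<longleftrightarrow> (a \<noteq> 0 \<and> b \<noteq> 0) \<or> (b \<noteq> 0 \<and> c \<noteq> 0) \<or> (a \<noteq> 0 \<and> c \<noteq> 0)"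
  by (simp add: two_coords_nonzero_def)

lemma all_coords_nonzero_imp_two: "all_coords_nonzero v \<Longrightarrow> two_coords_nonzero v"
  by (cases v) simp

context cubic_extension
begin

section \<open>Orbits of \<open>S_T\<close>\<close>

lemma frob_vec_simp [simp]: "frob_vec q (a, b, c) = (F c, F a, F b)"
  by (simp add: frob_vec_def F_def)

lemma psi_vec_simp [simp]: "psi_vec q r (a, b, c) = (r * a, F r * b, F (F r) * c)"
  by (simp add: psi_vec_def flip: F_def F_F)

lemma frob_vec_eq_0_iff [simp]: "frob_vec q (v::'a tri) = (0, 0, 0) \<longleftrightarrow> v = (0, 0, 0)"
  by (cases v) auto

lemma psi_vec_eq_0_iff [simp]: "psi_vec q r (v::'a tri) = (0, 0, 0) \<longleftrightarrow> r = 0 \<or> v = (0, 0, 0)"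
  by (cases v) auto

lemma frob_vec_smult3: "frob_vec q (smult3 k v) = smult3 (F k) (frob_vec q v)"
  by (cases v) (simp add: F_mult)

lemma frob_vec_psi_vec: "frob_vec q (psi_vec q r (v::'a tri)) = psi_vec q r (frob_vec q v)"
  by (cases v) (simp add: F_mult)

lemma psi_vec_smult3: "psi_vec q r (smult3 k (v::'a tri)) = smult3 k (psi_vec q r v)"
  by (cases v) (simp add: algebra_simps)

lemma psi_vec_psi_vec: "psi_vec q r (psi_vec q s (v::'a tri)) = psi_vec q (r * s) v"
  by (cases v) (simp add: F_mult mult_ac)

lemma psi_vec_fixed_scalar: "F k = k \<Longrightarrow> psi_vec q (k * r) v = smult3 k (psi_vec q r v)"
  by (cases v) (simp add: F_mult)

lemma psi_vec_1 [simp]: "psi_vec q 1 (v::'a tri) = v"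
  by (cases v) simp

lemma frob_vec_frob_vec_frob_vec [simp]: "frob_vec q (frob_vec q (frob_vec q (v::'a tri))) = v"
  by (cases v) simp

lemma phi_cls: "phi q (cls (v::'a tri)) = cls (frob_vec q v)"
proof (rule Set.set_eqI, rule iffI)
  fix w
  assume "w \<in> phi q (cls v)"
  then obtain u where "u \<in> cls v" "w = frob_vec q u"
    unfolding phi_def by blast
  moreover from this obtain k where "k \<noteq> 0" "u = smult3 k v"
    unfolding mem_cls_iff by blast
  ultimately have "w = smult3 (F k) (frob_vec q v)"
    by (simp add: frob_vec_smult3)
  then show "w \<in> cls (frob_vec q v)"
    unfolding mem_cls_iff using \<open>k \<noteq> 0\<close> by (intro exI[of _ "F k"]) simp
next
  fix w
  assume "w \<in> cls (frob_vec q v)"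
  then obtain k where "k \<noteq> 0" "w = smult3 k (frob_vec q v)"
    unfolding mem_cls_iff by blast
  then have "w = frob_vec q (smult3 (F (F k)) v)"
    by (simp add: frob_vec_smult3)
  moreover have "smult3 (F (F k)) v \<in> cls v"
    unfolding mem_cls_iff using \<open>k \<noteq> 0\<close> by (intro exI[of _ "F (F k)"]) simp
  ultimately show "w \<in> phi q (cls v)"
    unfolding phi_def by blast
qed

lemma image_psi_vec_cls: "psi_vec q r ` cls (v::'a tri) = cls (psi_vec q r v)"
proof (rule Set.set_eqI, rule iffI)
  fix w
  assume "w \<in> psi_vec q r ` cls v"
  then obtain u where "u \<in> cls v" "w = psi_vec q r u"
    by blast
  moreover from this obtain k where "k \<noteq> 0" "u = smult3 k v"
    unfolding mem_cls_iff by blast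
  ultimately show "w \<in> cls (psi_vec q r v)"
    unfolding mem_cls_iff by (intro exI[of _ k]) (simp add: psi_vec_smult3)
next
  fix w
  assume "w \<in> cls (psi_vec q r v)"
  then obtain k where "k \<noteq> 0" "w = psi_vec q r (smult3 k v)"
    unfolding mem_cls_iff by (auto simp: psi_vec_smult3)
  moreover from this have "smult3 k v \<in> cls v"
    unfolding mem_cls_iff by auto
  ultimately show "w \<in> psi_vec q r ` cls v"
    by blast
qed

definition orbit :: "'a tri \<Rightarrow> 'a tri set set" where
  "orbit v = {cls (psi_vec q r v) | r. r \<noteq> 0}"

lemma orbit_eq_image: "orbit v = (\<lambda>r. cls (psi_vec q r v)) ` {r. r \<noteq> 0}"
  unfolding orbit_def by blast

lemma orbit_ST_cls: "orbit_ST q (cls v) = orbit v"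
  by (simp add: orbit_ST_def orbit_def image_psi_vec_cls)

lemma orbit_in_orb_ST: "v \<noteq> (0, 0, 0) \<Longrightarrow> orbit v \<in> orb_ST q"
  unfolding orb_ST_def using orbit_ST_cls cls_in_PG_points by blast

lemma orb_ST_obtains:
  assumes "B \<in> orb_ST q"
  obtains v where "v \<noteq> (0, 0, 0)" and "B = orbit v"
  using assms orbit_ST_cls unfolding orb_ST_def PG_points_iff by blast

lemma Pi_theta_eq_orbit: "Pi_theta q \<theta> = orbit (\<theta> * F \<theta>, 1, \<theta>)"
proof -
  have "r * \<theta> ^ (q + 1) = r * (\<theta> * F \<theta>)" "r ^ q = F r" "r ^ q\<^sup>2 = F (F r)" for r
    by (simp_all add: F_def power_add mult.commute flip: F_F)
  then show ?thesis
    by (simp add: Pi_theta_def orbit_def)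
qed

lemma S_theta_eq_orbit: "S_theta q \<theta> = orbit (\<theta>, 1, 0)"
  by (simp add: S_theta_def orbit_def F_def)

lemma image_phi_orbit: "phi q ` orbit v = orbit (frob_vec q v)"
  unfolding orbit_eq_image image_image phi_cls frob_vec_psi_vec ..

lemma orbit_reindex:
  assumes "\<And>r. r \<noteq> 0 \<Longrightarrow> h r \<noteq> 0" and "\<And>s. s \<noteq> 0 \<Longrightarrow> \<exists>r. r \<noteq> 0 \<and> s = h r"
    and "\<And>r. r \<noteq> 0 \<Longrightarrow> G (h r) = cls (psi_vec q r v)"
  shows "{G s | s. s \<noteq> 0} = orbit v"
proof (rule Set.set_eqI, rule iffI)
  fix P
  assume "P \<in> {G s | s. s \<noteq> 0}"
  then obtain r where "r \<noteq> 0" "P = G (h r)"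
    using assms(2) by blast
  then show "P \<in> orbit v"
    unfolding orbit_def using assms(3) by auto
next
  fix P
  assume "P \<in> orbit v"
  then obtain r where "r \<noteq> 0" "P = G (h r)"
    unfolding orbit_def using assms(3) by auto
  then show "P \<in> {G s | s. s \<noteq> 0}"
    using assms(1) by blast
qed

(* The cofactor identity D u x D w = det D * D^-1 (u x w) for D = diag (r, F r, F (F r)). *)

lemma cross_psi_vec:
  assumes "r \<noteq> 0"
  shows "cross (psi_vec q r (u::'a tri)) (psi_vec q r w) = smult3 (Norm q r) (psi_vec q (1 / r) (cross u w))"
proof -
  obtain a b c d e f where "u = (a, b, c)" "w = (d, e, f)"
    by (cases u, cases w)
  then show ?thesis
    using assms by (simp add: Norm_eq F_field_simps field_simps)
qed

lemma dot3_psi_vec_inverse: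
  assumes "r \<noteq> 0"
  shows "dot3 (psi_vec q r (v::'a tri)) (psi_vec q (1 / r) w) = dot3 v w"
proof -
  obtain a b c d e f where "v = (a, b, c)" "w = (d, e, f)"
    by (cases v, cases w)
  then show ?thesis
    using assms by (simp add: F_field_simps field_simps)
qed

lemma dot3_psi_vec_inverse3:
  assumes "all_coords_nonzero v"
  shows "dot3 (psi_vec q r v) (psi_vec q s (inverse3 v)) = tr (r * s)"
proof -
  obtain a b c where "v = (a, b, c)"
    by (cases v)
  then show ?thesis
    using assms by (simp add: tr_def F_field_simps field_simps)
qed

lemma cross_psi_vec_psi_vec:
  assumes "all_coords_nonzero v"
  shows "cross (psi_vec q r v) (psi_vec q s v) =
    smult3 (fst v * fst (snd v) * snd (snd v)) (psi_vec q (F (r * F s - F r * s)) (inverse3 v))"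
proof -
  obtain a b c where "v = (a, b, c)"
    by (cases v)
  then show ?thesis
    using assms by (simp add: F_field_simps field_simps)
qed

definition mu_vec :: "'a tri \<Rightarrow> 'a tri" where
  "mu_vec v = cross (frob_vec q v) (frob_vec q (frob_vec q v))"

lemma mu_vec_simp [simp]:
  "mu_vec (a, b, c) =
    (F a * F (F a) - F b * F (F c), F b * F (F b) - F c * F (F a), F c * F (F c) - F a * F (F b))"
  by (simp add: mu_vec_def)

lemma mu_vec_psi_vec:
  assumes "r \<noteq> 0"
  shows "mu_vec (psi_vec q r v) = smult3 (Norm q r) (psi_vec q (1 / r) (mu_vec v))"
  unfolding mu_vec_def frob_vec_psi_vec cross_psi_vec[OF assms] ..

lemma mu_vec_frob_vec: "mu_vec (frob_vec q v) = frob_vec q (mu_vec v)"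
  by (cases v) (simp add: F_field_simps)

lemma inverse3_frob_vec: "inverse3 (frob_vec q (v::'a tri)) = frob_vec q (inverse3 v)"
  by (cases v) (simp add: F_field_simps)

lemma dot3_frob_vec: "dot3 (frob_vec q v) (frob_vec q w) = F (dot3 v w)"
  by (cases v; cases w) (simp add: F_field_simps algebra_simps)

lemma all_coords_nonzero_frob_vec: "all_coords_nonzero (frob_vec q (v::'a tri)) \<longleftrightarrow> all_coords_nonzero v"
  by (cases v) auto

lemma Norm_nonzero: "(r::'a) \<noteq> 0 \<Longrightarrow> Norm q r \<noteq> 0"
  by (simp add: Norm_eq)

lemma cls_mu_vec_psi_vec:
  assumes "r \<noteq> 0"
  shows "cls (mu_vec (psi_vec q r v)) = cls (psi_vec q (1 / r) (mu_vec v))"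
  unfolding mu_vec_psi_vec[OF assms] using cls_smult3 Norm_nonzero assms by blast

lemma mu_vec_psi_vec_eq_0_iff:
  assumes "r \<noteq> 0"
  shows "mu_vec (psi_vec q r v) = (0, 0, 0) \<longleftrightarrow> mu_vec v = (0, 0, 0)"
  using assms by (simp add: mu_vec_psi_vec smult3_eq_0_iff Norm_nonzero)

lemma mu_pt_cls:
  assumes "mu_vec v \<noteq> (0, 0, 0)"
  shows "mu_pt q (cls v) = cls (mu_vec v)"
  using assms unfolding mu_pt_def phi_cls mu_vec_def by (rule join_cls)

lemma orbit_reindex_inverse:
  assumes "\<And>r. r \<noteq> 0 \<Longrightarrow> G (1 / r) = cls (psi_vec q r v)"
  shows "{G s | s. s \<noteq> 0} = orbit v"
  by (rule orbit_reindex[of "\<lambda>r. 1 / r"]) (use assms in \<open>auto intro: exI[of _ "1 / s" for s]\<close>)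

lemma image_mu_pt_orbit:
  assumes "mu_vec v \<noteq> (0, 0, 0)"
  shows "mu_pt q ` orbit v = orbit (mu_vec v)"
proof -
  have "mu_pt q ` orbit v = {mu_pt q (cls (psi_vec q s v)) | s. s \<noteq> 0}"
    unfolding orbit_def by blast
  also have "\<dots> = orbit (mu_vec v)"
    using assms by (intro orbit_reindex_inverse)
      (simp add: mu_pt_cls mu_vec_psi_vec_eq_0_iff cls_mu_vec_psi_vec)
  finally show ?thesis .
qed

lemma det3_frob_orbit_psi_vec:
  assumes "r \<noteq> 0"
  shows "det3 (psi_vec q r v) (frob_vec q (psi_vec q r v)) (frob_vec q (frob_vec q (psi_vec q r v)))
    = Norm q r * dot3 v (mu_vec v)"
  using assms unfolding det3_def
  by (simp add: mu_vec_def[symmetric] mu_vec_psi_vec dot3_smult3 dot3_psi_vec_inverse)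

lemma typeIII_pt_orbit:
  assumes "v \<noteq> (0, 0, 0)" and "dot3 v (mu_vec v) \<noteq> 0" and "P \<in> orbit v"
  shows "typeIII_pt q P"
proof -
  obtain r where r: "r \<noteq> 0" "P = cls (psi_vec q r v)"
    using assms(3) unfolding orbit_def by blast
  then have "cls (psi_vec q r v) \<in> PG_points"
    using assms(1) by (simp add: cls_in_PG_points)
  then show ?thesis
    using r assms Norm_nonzero[OF r(1)]
    by (simp add: typeIII_pt_def phi_cls collinear3_cls_iff det3_frob_orbit_psi_vec)
qed

lemma cls_psi_vec_eq_self_iff:
  assumes "two_coords_nonzero v" and "t \<noteq> 0"
  shows "cls (psi_vec q t v) = cls v \<longleftrightarrow> F t = t"
proof
  assume "cls (psi_vec q t v) = cls v"
  then obtain k where "psi_vec q t v = smult3 k v"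
    using cls_eqD[OF sym] by blast
  moreover obtain a b c where v: "v = (a, b, c)"
    by (cases v)
  ultimately have eqs: "t * a = k * a" "F t * b = k * b" "F (F t) * c = k * c"
    by simp_all
  consider "a \<noteq> 0" "b \<noteq> 0" | "b \<noteq> 0" "c \<noteq> 0" | "a \<noteq> 0" "c \<noteq> 0"
    using assms(1) v by auto
  then show "F t = t"
  proof cases
    case 1
    then show ?thesis
      using eqs by simp
  next
    case 2
    then have "F t = F (F t)"
      using eqs by simp
    then show ?thesis
      by simp
  next
    case 3
    then have "t = F (F t)"
      using eqs by simp
    then show ?thesis
      by (metis F_F_F)
  qed
next
  assume "F t = t"
  then have "psi_vec q t v = smult3 t v"
    using psi_vec_fixed_scalar[of t 1 v] by (cases v) simp
  then show "cls (psi_vec q t v) = cls v"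
    using assms(2) by (simp add: cls_smult3)
qed

definition Fq_units :: "'a set" where
  "Fq_units = {k. k \<noteq> 0 \<and> F k = k}"

lemma card_Fq_units: "card Fq_units = q - 1"
proof -
  have "Fq_units = {x. F x = x} - {0}"
    by (auto simp: Fq_units_def)
  then show ?thesis
    by (simp add: card_fixed_F card_Diff_singleton)
qed

lemma cls_psi_vec_eq_iff:
  assumes "two_coords_nonzero v" and "r \<noteq> 0" and "s \<noteq> 0"
  shows "cls (psi_vec q s v) = cls (psi_vec q r v) \<longleftrightarrow> s / r \<in> Fq_units"
proof -
  have "two_coords_nonzero (psi_vec q r v)"
    using assms(1,2) by (cases v) auto
  moreover have "psi_vec q s v = psi_vec q (s / r) (psi_vec q r v)"
    using assms(2) by (simp add: psi_vec_psi_vec)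
  ultimately show ?thesis
    using assms(2,3) cls_psi_vec_eq_self_iff[of "psi_vec q r v" "s / r"] by (simp add: Fq_units_def)
qed

lemma card_eq_card_image_orbit_mult:
  assumes "two_coords_nonzero v" and "A \<subseteq> {r. r \<noteq> 0}"
    and "\<And>k r. k \<in> Fq_units \<Longrightarrow> r \<in> A \<Longrightarrow> k * r \<in> A"
  shows "card A = card ((\<lambda>r. cls (psi_vec q r v)) ` A) * (q - 1)"
proof (rule card_eq_card_image_mult)
  fix P
  assume "P \<in> (\<lambda>r. cls (psi_vec q r v)) ` A"
  then obtain r where r: "r \<in> A" "P = cls (psi_vec q r v)"
    by blast
  then have "r \<noteq> 0"
    using assms(2) by auto
  have "{s \<in> A. cls (psi_vec q s v) = P} = (\<lambda>k. k * r) ` Fq_units"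
  proof (rule Set.set_eqI, rule iffI)
    fix s
    assume s: "s \<in> {s \<in> A. cls (psi_vec q s v) = P}"
    then have "s \<noteq> 0"
      using assms(2) by auto
    then have "s / r \<in> Fq_units"
      using s r(2) cls_psi_vec_eq_iff[OF assms(1) \<open>r \<noteq> 0\<close>] by simp
    moreover have "s = s / r * r"
      using \<open>r \<noteq> 0\<close> by simp
    ultimately show "s \<in> (\<lambda>k. k * r) ` Fq_units"
      by blast
  next
    fix s
    assume "s \<in> (\<lambda>k. k * r) ` Fq_units"
    then obtain k where "k \<in> Fq_units" "s = k * r"
      by blast
    then show "s \<in> {s \<in> A. cls (psi_vec q s v) = P}"
      using r assms \<open>r \<noteq> 0\<close> cls_psi_vec_eq_iff by (auto simp: Fq_units_def)
  qed
  also have "card \<dots> = q - 1"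
    using \<open>r \<noteq> 0\<close> by (simp add: card_image inj_on_def card_Fq_units)
  finally show "card {s \<in> A. cls (psi_vec q s v) = P} = q - 1" .
qed simp

lemma card_orbit:
  assumes "two_coords_nonzero v"
  shows "card (orbit v) = q\<^sup>2 + q + 1"
proof -
  have "card {r::'a. r \<noteq> 0} = card (orbit v) * (q - 1)"
    unfolding orbit_eq_image using assms
    by (rule card_eq_card_image_orbit_mult) (auto simp: Fq_units_def)
  moreover have "card {r::'a. r \<noteq> 0} = (q\<^sup>2 + q + 1) * (q - 1)"
  proof -
    have "{r::'a. r \<noteq> 0} = UNIV - {0}"
      by blast
    then have "card {r::'a. r \<noteq> 0} = q ^ 3 - 1"
      by (simp add: card_Diff_singleton card_field)
    also have "\<dots> = (q\<^sup>2 + q + 1) * (q - 1)"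
      using q_ge_2 by (cases q) (simp_all add: power2_eq_square power3_eq_cube algebra_simps)
    finally show ?thesis .
  qed
  moreover have "q - 1 \<noteq> 0"
    using q_ge_2 by simp
  ultimately show ?thesis
    by (metis mult_right_cancel)
qed

lemma card_orbit_on_line:
  assumes "all_coords_nonzero v" and "u \<noteq> 0"
  shows "card {P \<in> orbit v. incid P (cls (psi_vec q u (inverse3 v)))} = q + 1"
proof -
  let ?A = "{r. r \<noteq> 0 \<and> tr (r * u) = 0}"
  have nonzero: "psi_vec q r v \<noteq> (0, 0, 0)" "psi_vec q u (inverse3 v) \<noteq> (0, 0, 0)" if "r \<noteq> 0" for r
    using assms that all_coords_nonzero_inverse3[OF assms(1)] by auto
  have points: "{P \<in> orbit v. incid P (cls (psi_vec q u (inverse3 v)))} = (\<lambda>r. cls (psi_vec q r v)) ` ?A"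
    unfolding orbit_def using nonzero
    by (auto simp: incid_cls_iff dot3_psi_vec_inverse3[OF assms(1)])
  have by_orbit: "card ?A = card ((\<lambda>r. cls (psi_vec q r v)) ` ?A) * (q - 1)"
    using assms(1) by (rule card_eq_card_image_orbit_mult[OF all_coords_nonzero_imp_two])
      (auto simp: Fq_units_def tr_mult_fixed mult.assoc)
  have "card ?A = (q + 1) * (q - 1)"
  proof -
    have "?A = (\<lambda>x. x / u) ` ({x. tr x = 0} - {0})"
    proof (rule Set.set_eqI, rule iffI)
      fix r
      assume "r \<in> ?A"
      then show "r \<in> (\<lambda>x. x / u) ` ({x. tr x = 0} - {0})"
        using assms(2) by (intro image_eqI[of _ _ "r * u"]) auto
    qed (use assms(2) in auto)
    then have "card ?A = card ({x. tr x = 0} - {0})"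
      using assms(2) by (simp add: card_image inj_on_def)
    also have "\<dots> = q\<^sup>2 - 1"
      by (simp add: card_tr_kernel card_Diff_singleton tr_0)
    also have "\<dots> = (q + 1) * (q - 1)"
      using q_ge_2 by (cases q) (simp_all add: power2_eq_square algebra_simps)
    finally show ?thesis .
  qed
  then have "card ((\<lambda>r. cls (psi_vec q r v)) ` ?A) * (q - 1) = (q + 1) * (q - 1)"
    unfolding by_orbit .
  moreover have "q - 1 \<noteq> 0"
    using q_ge_2 by simp
  ultimately show ?thesis
    unfolding points by (rule mult_right_cancel[THEN iffD1, rotated])
qed

lemma line_through_two_orbit_points:
  assumes "all_coords_nonzero v" and "P \<in> orbit v" and "Q \<in> orbit v" and "P \<noteq> Q"
    and "incid P l" and "incid Q l"
  shows "l \<in> orbit (inverse3 v)"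
proof -
  obtain r s where r: "r \<noteq> 0" "P = cls (psi_vec q r v)" and s: "s \<noteq> 0" "Q = cls (psi_vec q s v)"
    using assms(2,3) unfolding orbit_def by blast
  have nonzero: "psi_vec q r v \<noteq> (0, 0, 0)" "psi_vec q s v \<noteq> (0, 0, 0)"
    using r(1) s(1) assms(1) by auto
  have cross: "cross (psi_vec q r v) (psi_vec q s v) \<noteq> (0, 0, 0)"
    using cls_eq_iff_cross[OF nonzero] r(2) s(2) assms(4) by blast
  have "l \<in> PG_points"
    using assms(5) by (simp add: incid_def PG_lines_eq_PG_points)
  then obtain w where w: "w \<noteq> (0, 0, 0)" "l = cls w"
    unfolding PG_points_iff by blast
  then have "dot3 (psi_vec q r v) w = 0" "dot3 (psi_vec q s v) w = 0"
    using assms(5,6) r(2) s(2) nonzero by (simp_all add: incid_cls_iff)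
  then have l: "l = cls (cross (psi_vec q r v) (psi_vec q s v))"
    using cls_eq_cls_cross[OF cross w(1)] w(2) by simp
  define k where "k = fst v * fst (snd v) * snd (snd v)"
  define u where "u = F (r * F s - F r * s)"
  have "k \<noteq> 0"
    using assms(1) by (cases v) (simp add: k_def)
  moreover have eq: "cross (psi_vec q r v) (psi_vec q s v) = smult3 k (psi_vec q u (inverse3 v))"
    unfolding k_def u_def by (rule cross_psi_vec_psi_vec[OF assms(1)])
  moreover have "u \<noteq> 0"
    using cross eq by (auto simp: smult3_eq_0_iff)
  ultimately show ?thesis
    unfolding l orbit_def by (auto simp: cls_smult3)
qed

lemma lines_of_orbit:
  assumes "all_coords_nonzero v"
  shows "lines_of q (orbit v) = orbit (inverse3 v)"
proof (rule Set.set_eqI, rule iffI)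
  fix l
  assume "l \<in> lines_of q (orbit v)"
  then have "2 \<le> card {P \<in> orbit v. incid P l}"
    using q_ge_2 by (simp add: lines_of_def)
  then obtain P Q where "P \<in> {P \<in> orbit v. incid P l}" "Q \<in> {P \<in> orbit v. incid P l}" "P \<noteq> Q"
    by (rule exists_two_elements)
  then show "l \<in> orbit (inverse3 v)"
    using line_through_two_orbit_points[OF assms] by blast
next
  fix l
  assume "l \<in> orbit (inverse3 v)"
  then obtain u where u: "u \<noteq> 0" "l = cls (psi_vec q u (inverse3 v))"
    unfolding orbit_def by blast
  moreover have "psi_vec q u (inverse3 v) \<noteq> (0, 0, 0)"
    using u(1) all_coords_nonzero_imp_nonzero[OF all_coords_nonzero_inverse3[OF assms]] by simp
  ultimately have "l \<in> PG_lines"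
    by (simp add: PG_lines_eq_PG_points cls_in_PG_points)
  then show "l \<in> lines_of q (orbit v)"
    using card_orbit_on_line[OF assms u(1)] u(2) by (simp add: lines_of_def)
qed

lemma orbit_subset_PG_points: "v \<noteq> (0, 0, 0) \<Longrightarrow> orbit v \<subseteq> PG_points"
  unfolding orbit_def by (auto intro: cls_in_PG_points)

lemma card_secant_orbit:
  assumes "all_coords_nonzero v" and "P \<in> orbit v" and "Q \<in> orbit v" and "P \<noteq> Q"
    and "incid P l" and "incid Q l"
  shows "card {P \<in> orbit v. incid P l} = q + 1"
proof -
  have "l \<in> lines_of q (orbit v)"
    using line_through_two_orbit_points[OF assms] lines_of_orbit[OF assms(1)] by simp
  then show ?thesis
    by (simp add: lines_of_def)
qed

lemma meet_in_orbit:
  assumes "all_coords_nonzero v" and "l \<in> orbit (inverse3 v)" and "m \<in> orbit (inverse3 v)"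
    and "l \<noteq> m"
  shows "\<exists>P\<in>orbit v. incid P l \<and> incid P m"
proof -
  (* Dually, l and m are points of orbit (inverse3 v), and the line joining them lies in orbit v. *)
  have v': "all_coords_nonzero (inverse3 v)"
    using assms(1) by (rule all_coords_nonzero_inverse3)
  then have "l \<in> PG_points" "m \<in> PG_points"
    using assms(2,3) orbit_subset_PG_points[OF all_coords_nonzero_imp_nonzero[OF v']] by auto
  then obtain P where P: "incid l P" "incid m P"
    using line_through_two_points assms(4) by blast
  have "P \<in> orbit (inverse3 (inverse3 v))"
    by (rule line_through_two_orbit_points[OF v' assms(2-4) P])
  then show ?thesis
    using P inverse3_inverse3[OF assms(1)] by (auto simp: incid_commute[of l] incid_commute[of m])
qed

lemma is_Fq_plane_orbit:
  assumes "all_coords_nonzero v"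
  shows "is_Fq_plane q (orbit v)"
proof -
  have subset: "orbit v \<subseteq> PG_points"
    by (rule orbit_subset_PG_points[OF all_coords_nonzero_imp_nonzero[OF assms]])
  have "card {P \<in> orbit v. incid P l} = q + 1"
    if two: "2 \<le> card {P \<in> orbit v. incid P l}" for l
  proof -
    obtain P Q where "P \<in> {P \<in> orbit v. incid P l}" "Q \<in> {P \<in> orbit v. incid P l}" "P \<noteq> Q"
      using two by (rule exists_two_elements)
    then show ?thesis
      using card_secant_orbit[OF assms] by blast
  qed
  moreover have "\<exists>P1\<in>orbit v. \<exists>P2\<in>orbit v. \<exists>P3\<in>orbit v. \<exists>P4\<in>orbit v.
      \<not> collinear3 P1 P2 P3 \<and> \<not> collinear3 P1 P2 P4 \<and> \<not> collinear3 P1 P3 P4 \<and> \<not> collinear3 P2 P3 P4"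
  proof (rule exists_quadrangle[OF subset])
    have "3 * q < q\<^sup>2 + q + 1"
      using q_ge_2 by (cases q) (simp_all add: power2_eq_square)
    then show "3 * q < card (orbit v)"
      using card_orbit[OF all_coords_nonzero_imp_two[OF assms]] by simp
    show "\<exists>l. incid P l \<and> incid Q l \<and> card {R \<in> orbit v. incid R l} = q + 1"
      if "P \<in> orbit v" "Q \<in> orbit v" "P \<noteq> Q" for P Q
      using line_through_two_points[of P Q] that subset card_secant_orbit[OF assms] by blast
  qed (use q_ge_2 in simp_all)
  moreover have "\<exists>P\<in>orbit v. incid P l \<and> incid P m"
    if "l \<in> lines_of q (orbit v)" "m \<in> lines_of q (orbit v)" "l \<noteq> m" for l m
    using meet_in_orbit[OF assms] that lines_of_orbit[OF assms] by simp
  ultimately show ?thesis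
    unfolding is_Fq_plane_def using subset by blast
qed

lemma image_mu_line_lines_of_orbit:
  assumes "all_coords_nonzero v" and "mu_vec (inverse3 v) \<noteq> (0, 0, 0)"
  shows "mu_line_set q (orbit v) = orbit (mu_vec (inverse3 v))"
  unfolding mu_line_set_def lines_of_orbit[OF assms(1)] mu_line_eq_mu_pt using assms(2)
  by (rule image_mu_pt_orbit)

lemma typeIII_lines_of_orbit:
  assumes "all_coords_nonzero v" and "dot3 (inverse3 v) (mu_vec (inverse3 v)) \<noteq> 0"
    and "l \<in> lines_of q (orbit v)"
  shows "typeIII_line q l"
  using typeIII_pt_orbit[OF all_coords_nonzero_imp_nonzero[OF all_coords_nonzero_inverse3[OF assms(1)]]
      assms(2)] assms(3) lines_of_orbit[OF assms(1)] by (simp add: typeIII_line_iff_typeIII_pt)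

section \<open>Slses, pencils and \<open>T\<close>-planes\<close>

lemma orbit_smult3_psi_vec:
  assumes "k \<noteq> 0" and "t \<noteq> 0"
  shows "orbit (smult3 k (psi_vec q t v)) = orbit v"
proof -
  have "orbit (smult3 k (psi_vec q t v)) = {cls (psi_vec q s (smult3 k (psi_vec q t v))) | s. s \<noteq> 0}"
    unfolding orbit_def ..
  also have "\<dots> = orbit v"
  proof (rule orbit_reindex[of "\<lambda>r. r / t"])
    show "\<exists>r. r \<noteq> 0 \<and> s = r / t" if "s \<noteq> 0" for s
      using that assms(2) by (intro exI[of _ "s * t"]) simp
    show "cls (psi_vec q (r / t) (smult3 k (psi_vec q t v))) = cls (psi_vec q r v)" if "r \<noteq> 0" for r
      using assms by (simp add: psi_vec_smult3 psi_vec_psi_vec cls_smult3)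
  qed (use assms(2) in simp)
  finally show ?thesis .
qed

lemma orbit_smult3: "k \<noteq> 0 \<Longrightarrow> orbit (smult3 k v) = orbit v"
  using orbit_smult3_psi_vec[of k 1 v] by simp

lemma incid_orbit:
  assumes "v \<noteq> (0, 0, 0)" and "e \<noteq> (0, 0, 0)" and "\<And>r. dot3 (psi_vec q r v) e = 0"
    and "P \<in> orbit v"
  shows "incid P (cls e)"
  using assms unfolding orbit_def by (auto simp: incid_cls_iff)

lemma sls_on_orbit:
  assumes "two_coords_nonzero v" and "e \<noteq> (0, 0, 0)" and "\<And>r. dot3 (psi_vec q r v) e = 0"
  shows "sls_on q (cls e) (orbit v)"
proof -
  have "v \<noteq> (0, 0, 0)"
    using assms(1) by auto
  then show ?thesis
    unfolding sls_on_def using assms incid_orbit orbit_in_orb_ST card_orbit by blast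
qed

lemma pencil_orbit:
  assumes fixed: "\<And>s. s \<noteq> 0 \<Longrightarrow> cls (psi_vec q s e) = cls e" and "cross e w \<noteq> (0, 0, 0)"
  shows "pencil (cls e) (orbit w) = orbit (cross e w)"
proof -
  have "pencil (cls e) (orbit w) = {Defs.join (cls e) (cls (psi_vec q s w)) | s. s \<noteq> 0}"
    unfolding pencil_def orbit_def by blast
  also have "\<dots> = orbit (cross e w)"
  proof (rule orbit_reindex_inverse)
    fix r :: 'a
    assume "r \<noteq> 0"
    have cross: "cross (psi_vec q (1 / r) e) (psi_vec q (1 / r) w) =
        smult3 (Norm q (1 / r)) (psi_vec q r (cross e w))"
      using cross_psi_vec[of "1 / r" e w] \<open>r \<noteq> 0\<close> by simp
    moreover have "Norm q (1 / r) \<noteq> 0"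
      using \<open>r \<noteq> 0\<close> by (simp add: Norm_nonzero)
    ultimately have nonzero: "cross (psi_vec q (1 / r) e) (psi_vec q (1 / r) w) \<noteq> (0, 0, 0)"
      using assms(2) \<open>r \<noteq> 0\<close> by (simp add: smult3_eq_0_iff)
    have "Defs.join (cls e) (cls (psi_vec q (1 / r) w)) =
        Defs.join (cls (psi_vec q (1 / r) e)) (cls (psi_vec q (1 / r) w))"
      using fixed[of "1 / r"] \<open>r \<noteq> 0\<close> by simp
    also have "\<dots> = cls (cross (psi_vec q (1 / r) e) (psi_vec q (1 / r) w))"
      by (rule join_cls[OF nonzero])
    also have "\<dots> = cls (psi_vec q r (cross e w))"
      unfolding cross by (rule cls_smult3[OF \<open>Norm q (1 / r) \<noteq> 0\<close>])
    finally show "Defs.join (cls e) (cls (psi_vec q (1 / r) w)) = cls (psi_vec q r (cross e w))" .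
  qed
  finally show ?thesis .
qed

lemma cls_psi_vec_coordinate_points:
  fixes s :: 'a
  assumes "s \<noteq> 0"
  shows "cls (psi_vec q s (1, 0, 0)) = cls (1, 0, 0)"
    and "cls (psi_vec q s (0, 1, 0)) = cls (0, 1, 0)"
    and "cls (psi_vec q s (0, 0, 1)) = cls (0, 0, 1)"
  using assms cls_smult3[of s "(1, 0, 0)"] cls_smult3[of "F s" "(0, 1, 0)"]
    cls_smult3[of "F (F s)" "(0, 0, 1)"] by simp_all

lemma join_coordinate_points:
  "Defs.join ptTphi2 ptT = (cls (1, 0, 0) :: 'a tri set)"
  "Defs.join ptT ptTphi = (cls (0, 1, 0) :: 'a tri set)"
  unfolding ptT_def ptTphi_def ptTphi2_def by (simp_all add: join_cls)

lemma T_plane_orbit: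
  assumes "all_coords_nonzero v" and "snd (snd (mu_vec v)) = 0"
  shows "T_plane q (orbit v)"
proof -
  obtain a b c where v: "v = (a, b, c)"
    by (cases v)
  define \<theta> where "\<theta> = c / b"
  have "F (F (F c * F (F c))) = F (F (F a * F (F b)))"
    using assms(2) v by simp
  then have "c * F c = a * F b"
    by (simp add: F_mult)
  then have v_eq: "v = smult3 b (\<theta> * F \<theta>, 1, \<theta>)"
    using assms(1) v by (simp add: \<theta>_def F_divide field_simps)
  have "b \<noteq> 0"
    using assms(1) v by simp
  then have "orbit v = Pi_theta q \<theta>"
    unfolding Pi_theta_eq_orbit by (subst v_eq) (rule orbit_smult3)
  moreover have "\<theta> \<noteq> 0"
    using assms(1) v by (simp add: \<theta>_def)
  ultimately show ?thesis
    unfolding T_plane_def by blast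
qed

lemma Tphi_plane_orbit:
  assumes "all_coords_nonzero v" and "fst (mu_vec v) = 0"
  shows "Tphi_plane q (orbit v)"
proof -
  let ?w = "frob_vec q (frob_vec q v)"
  have "T_plane q (orbit ?w)"
    using assms by (intro T_plane_orbit)
      (simp add: all_coords_nonzero_frob_vec, cases "mu_vec v", simp add: mu_vec_frob_vec)
  then obtain \<theta> where "\<theta> \<noteq> 0" "orbit ?w = Pi_theta q \<theta>"
    unfolding T_plane_def by blast
  moreover have "orbit v = phi q ` orbit ?w"
    by (simp add: image_phi_orbit)
  ultimately show ?thesis
    unfolding Tphi_plane_def by auto
qed

lemma Tphi2_plane_orbit:
  assumes "all_coords_nonzero v" and "fst (snd (mu_vec v)) = 0"
  shows "Tphi2_plane q (orbit v)"
proof -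
  let ?w = "frob_vec q v"
  have "T_plane q (orbit ?w)"
    using assms by (intro T_plane_orbit)
      (simp add: all_coords_nonzero_frob_vec, cases "mu_vec v", simp add: mu_vec_frob_vec)
  then obtain \<theta> where "\<theta> \<noteq> 0" "orbit ?w = Pi_theta q \<theta>"
    unfolding T_plane_def by blast
  moreover have "orbit v = phi q ` phi q ` orbit ?w"
    by (simp add: image_phi_orbit)
  ultimately show ?thesis
    unfolding Tphi2_plane_def by auto
qed

lemma all_coords_nonzero_mu_vec:
  assumes "all_coords_nonzero v"
    and "\<not> T_plane q (orbit v)" and "\<not> Tphi_plane q (orbit v)" and "\<not> Tphi2_plane q (orbit v)"
  shows "all_coords_nonzero (mu_vec v)"
  using assms T_plane_orbit Tphi_plane_orbit Tphi2_plane_orbit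
  unfolding all_coords_nonzero_def by blast

lemma all_coords_nonzero_mu_vec_inverse3:
  assumes "all_coords_nonzero (mu_vec v)"
  shows "all_coords_nonzero (mu_vec (inverse3 v))"
proof -
  obtain a b c where v: "v = (a, b, c)"
    by (cases v)
  have "F a * F (F a) \<noteq> F b * F (F c)" "F b * F (F b) \<noteq> F c * F (F a)"
    "F c * F (F c) \<noteq> F a * F (F b)"
    using assms v by auto
  moreover have "mu_vec (inverse3 v) =
      (1 / (F a * F (F a)) - 1 / (F b * F (F c)), 1 / (F b * F (F b)) - 1 / (F c * F (F a)),
       1 / (F c * F (F c)) - 1 / (F a * F (F b)))"
    using v by (simp add: F_divide)
  ultimately show ?thesis
    by (simp flip: inverse_mult_distrib)
qed

lemma all_coords_nonzero_if_is_Fq_plane_orbit: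
  assumes "v \<noteq> (0, 0, 0)" and "is_Fq_plane q (orbit v)"
  shows "all_coords_nonzero v"
proof (rule ccontr)
  assume "\<not> all_coords_nonzero v"
  define e :: "'a tri" where
    "e = (if fst v = 0 then (1, 0, 0) else if fst (snd v) = 0 then (0, 1, 0) else (0, 0, 1))"
  have e: "e \<noteq> (0, 0, 0)" "\<And>r. dot3 (psi_vec q r v) e = 0"
    using \<open>\<not> all_coords_nonzero v\<close> by (cases v, auto simp: e_def)+
  have "cls e \<in> PG_lines"
    using e(1) by (simp add: PG_lines_eq_PG_points cls_in_PG_points)
  moreover have "incid P (cls e)" if "P \<in> orbit v" for P
    using incid_orbit[OF assms(1) e that] .
  ultimately have "collinear3 P1 P2 P3" if "P1 \<in> orbit v" "P2 \<in> orbit v" "P3 \<in> orbit v"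
    for P1 P2 P3
    using that unfolding collinear3_def by blast
  moreover have "\<exists>P1\<in>orbit v. \<exists>P2\<in>orbit v. \<exists>P3\<in>orbit v. \<exists>P4\<in>orbit v.
      \<not> collinear3 P1 P2 P3 \<and> \<not> collinear3 P1 P2 P4 \<and> \<not> collinear3 P1 P3 P4 \<and> \<not> collinear3 P2 P3 P4"
    using assms(2) unfolding is_Fq_plane_def by (elim conjE)
  ultimately show False
    by blast
qed

section \<open>The images under \<open>\<mu>\<close>\<close>

lemma typeIII_orbit:
  assumes "all_coords_nonzero v"
    and "dot3 v (mu_vec v) \<noteq> 0" and "dot3 (inverse3 v) (mu_vec (inverse3 v)) \<noteq> 0"
  shows "(\<forall>P\<in>orbit v. typeIII_pt q P) \<and> (\<forall>l\<in>lines_of q (orbit v). typeIII_line q l)"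
  using typeIII_pt_orbit[OF all_coords_nonzero_imp_nonzero[OF assms(1)] assms(2)]
    typeIII_lines_of_orbit[OF assms(1,3)] by blast

lemma dot3_mu_vec_frob_vec: "dot3 (frob_vec q v) (mu_vec (frob_vec q v)) = F (dot3 v (mu_vec v))"
  by (simp add: mu_vec_frob_vec dot3_frob_vec)

lemma typeIII_conditions_frob_vec:
  assumes "all_coords_nonzero v"
    and "dot3 v (mu_vec v) \<noteq> 0" and "dot3 (inverse3 v) (mu_vec (inverse3 v)) \<noteq> 0"
  shows "all_coords_nonzero (frob_vec q v)"
    and "dot3 (frob_vec q v) (mu_vec (frob_vec q v)) \<noteq> 0"
    and "dot3 (inverse3 (frob_vec q v)) (mu_vec (inverse3 (frob_vec q v))) \<noteq> 0"
  using assms by (simp_all add: all_coords_nonzero_frob_vec dot3_mu_vec_frob_vec inverse3_frob_vec)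

lemma mu_vec_T_plane_vector:
  assumes "\<theta> \<noteq> 0" and "Norm q \<theta> \<noteq> 1"
  defines "N \<equiv> Norm q \<theta>"
  shows "mu_vec (\<theta> * F \<theta>, 1, \<theta>) = (F (F \<theta>) * (N - 1), 1 - N, 0)"
    and "mu_vec (inverse3 (\<theta> * F \<theta>, 1, \<theta>)) = ((1 - N) / (N * F (F \<theta>)), (N - 1) / N, 0)"
    and "dot3 (\<theta> * F \<theta>, 1, \<theta>) (mu_vec (\<theta> * F \<theta>, 1, \<theta>)) \<noteq> 0"
    and "dot3 (inverse3 (\<theta> * F \<theta>, 1, \<theta>)) (mu_vec (inverse3 (\<theta> * F \<theta>, 1, \<theta>))) \<noteq> 0"
    and "F (F \<theta>) * (N - 1) \<noteq> 0" and "1 - N \<noteq> 0"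
    and "(1 - N) / (N * F (F \<theta>)) \<noteq> 0" and "(N - 1) / N \<noteq> 0"
proof -
  have N: "N = \<theta> * F \<theta> * F (F \<theta>)" "N \<noteq> 0" "N \<noteq> 1"
    using assms by (simp_all add: N_def Norm_eq)
  then show "F (F \<theta>) * (N - 1) \<noteq> 0" "1 - N \<noteq> 0" "(1 - N) / (N * F (F \<theta>)) \<noteq> 0" "(N - 1) / N \<noteq> 0"
    using assms(1) by simp_all
  show mu: "mu_vec (\<theta> * F \<theta>, 1, \<theta>) = (F (F \<theta>) * (N - 1), 1 - N, 0)"
    using N(1) by (simp add: F_mult algebra_simps)
  show mu_inverse: "mu_vec (inverse3 (\<theta> * F \<theta>, 1, \<theta>)) = ((1 - N) / (N * F (F \<theta>)), (N - 1) / N, 0)"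
    using N(1) assms(1) by (simp add: F_divide F_mult field_simps)
  have "dot3 (\<theta> * F \<theta>, 1, \<theta>) (mu_vec (\<theta> * F \<theta>, 1, \<theta>)) = (N - 1) * (N - 1)"
    unfolding mu using N(1) by (simp add: algebra_simps)
  then show "dot3 (\<theta> * F \<theta>, 1, \<theta>) (mu_vec (\<theta> * F \<theta>, 1, \<theta>)) \<noteq> 0"
    using N(3) by simp
  have "dot3 (inverse3 (\<theta> * F \<theta>, 1, \<theta>)) (mu_vec (inverse3 (\<theta> * F \<theta>, 1, \<theta>))) = (N - 1) * (N - 1) / (N * N)"
    unfolding mu_inverse using N(1,2) assms(1) by (simp add: field_simps)
  then show "dot3 (inverse3 (\<theta> * F \<theta>, 1, \<theta>)) (mu_vec (inverse3 (\<theta> * F \<theta>, 1, \<theta>))) \<noteq> 0"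
    using N(2,3) by simp
qed

lemma mu_line_set_T_plane:
  fixes \<theta> :: 'a
  assumes "\<theta> \<noteq> 0" and "Norm q \<theta> \<noteq> 1"
  shows "mu_line_set q (Pi_theta q \<theta>) = S_theta q (- 1 / \<theta>)"
proof -
  define N where "N = Norm q \<theta>"
  let ?v = "(\<theta> * F \<theta>, 1, \<theta>)"
  note vectors = mu_vec_T_plane_vector[OF assms, folded N_def]
  have N: "N \<noteq> 0" "N \<noteq> 1"
    using assms by (simp_all add: N_def Norm_eq)
  have mu_inverse: "mu_vec (inverse3 ?v) =
      smult3 ((N - 1) / (N * F \<theta> * F (F \<theta>))) (psi_vec q (\<theta> * F \<theta>) (- 1 / \<theta>, 1, 0))"
    unfolding vectors(2) using assms(1) N(1) by (simp add: F_mult field_simps)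
  have "mu_vec (inverse3 ?v) \<noteq> (0, 0, 0)"
    unfolding vectors(2) using N by simp
  then have "mu_line_set q (orbit ?v) = orbit (mu_vec (inverse3 ?v))"
    using assms(1) by (intro image_mu_line_lines_of_orbit) simp_all
  also have "\<dots> = orbit (- 1 / \<theta>, 1, 0)"
    unfolding mu_inverse using assms(1) N by (intro orbit_smult3_psi_vec) simp_all
  finally show ?thesis
    unfolding Pi_theta_eq_orbit S_theta_eq_orbit .
qed

lemma mu_pt_set_T_plane:
  fixes \<theta> :: 'a
  assumes "\<theta> \<noteq> 0" and "Norm q \<theta> \<noteq> 1"
  shows "mu_pt_set q (Pi_theta q \<theta>) = pencil ptT (S_theta q (1 / \<theta>))"
proof -
  define N where "N = Norm q \<theta>"
  let ?v = "(\<theta> * F \<theta>, 1, \<theta>)"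
  note vectors = mu_vec_T_plane_vector[OF assms, folded N_def]
  have N: "N = \<theta> * F \<theta> * F (F \<theta>)" "N \<noteq> 0" "N \<noteq> 1"
    using assms by (simp_all add: N_def Norm_eq)
  have mu: "mu_vec ?v = smult3 ((1 - N) * N) (psi_vec q (1 / (\<theta> * F \<theta>)) (- 1, 1 / \<theta>, 0))"
    unfolding vectors(1) using assms(1) N by (simp add: F_divide F_mult field_simps)
  have "mu_vec ?v \<noteq> (0, 0, 0)"
    unfolding vectors(1) using N(3) by simp
  then have "mu_pt_set q (orbit ?v) = orbit (mu_vec ?v)"
    unfolding mu_pt_set_def by (rule image_mu_pt_orbit)
  also have "\<dots> = orbit (- 1, 1 / \<theta>, 0)"
    unfolding mu using assms(1) N(2,3) by (intro orbit_smult3_psi_vec) simp_all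
  also have "\<dots> = pencil ptT (orbit (1 / \<theta>, 1, 0))"
    unfolding ptT_def using pencil_orbit[OF cls_psi_vec_coordinate_points(3), of "(1 / \<theta>, 1, 0)"]
    by simp
  finally show ?thesis
    unfolding Pi_theta_eq_orbit S_theta_eq_orbit .
qed

lemma mu_images_T_plane:
  fixes \<theta> :: 'a
  assumes "\<theta> \<noteq> 0" and "Norm q \<theta> \<noteq> 1"
  shows "(\<forall>P\<in>Pi_theta q \<theta>. typeIII_pt q P) \<and>
    (\<forall>l\<in>lines_of q (Pi_theta q \<theta>). typeIII_line q l) \<and>
    mu_line_set q (Pi_theta q \<theta>) = S_theta q (- 1 / \<theta>) \<and>
    mu_pt_set q (Pi_theta q \<theta>) = pencil ptT (S_theta q (1 / \<theta>))"
proof -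
  have "all_coords_nonzero (\<theta> * F \<theta>, 1, \<theta>)"
    using assms(1) by simp
  then show ?thesis
    using typeIII_orbit[OF _ mu_vec_T_plane_vector(3,4)[OF assms]] mu_line_set_T_plane[OF assms]
      mu_pt_set_T_plane[OF assms] by (simp add: Pi_theta_eq_orbit)
qed

lemma mu_images_phi_orbit:
  assumes "all_coords_nonzero v"
    and "dot3 v (mu_vec v) \<noteq> 0" and "dot3 (inverse3 v) (mu_vec (inverse3 v)) \<noteq> 0"
    and mu: "mu_vec v = (m1, m2, 0)" "m1 \<noteq> 0" "m2 \<noteq> 0"
    and mu_inverse: "mu_vec (inverse3 v) = (l1, l2, 0)" "l1 \<noteq> 0" "l2 \<noteq> 0"
  shows "(\<forall>P\<in>phi q ` orbit v. typeIII_pt q P) \<and>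
    (\<forall>l\<in>lines_of q (phi q ` orbit v). typeIII_line q l) \<and>
    Tphi_sls q (mu_line_set q (phi q ` orbit v)) \<and>
    (\<exists>S. Tphi_sls q S \<and> mu_pt_set q (phi q ` orbit v) = pencil ptTphi S)"
proof -
  let ?w = "frob_vec q v"
  note w = typeIII_conditions_frob_vec[OF assms(1-3)]
  have sls: "Tphi_sls q (orbit (0, x, y))" if "x \<noteq> 0" "y \<noteq> 0" for x y
    unfolding Tphi_sls_def join_coordinate_points by (rule sls_on_orbit) (use that in simp_all)
  have "mu_line_set q (orbit ?w) = orbit (0, F l1, F l2)"
    using image_mu_line_lines_of_orbit[OF w(1)] mu_inverse
    by (simp add: inverse3_frob_vec mu_vec_frob_vec)
  moreover have "mu_pt_set q (orbit ?w) = orbit (0, F m1, F m2)"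
    unfolding mu_pt_set_def using image_mu_pt_orbit mu by (simp add: mu_vec_frob_vec)
  moreover have "pencil ptTphi (orbit (0, F m2, - F m1)) = orbit (0, F m1, F m2)"
    unfolding ptTphi_def using pencil_orbit[OF cls_psi_vec_coordinate_points(1), of "(0, F m2, - F m1)"] mu
    by simp
  ultimately show ?thesis
    unfolding image_phi_orbit using typeIII_orbit[OF w] sls mu mu_inverse
    by (auto intro!: exI[of _ "orbit (0, F m2, - F m1)"])
qed

lemma mu_images_phi2_orbit:
  assumes "all_coords_nonzero v"
    and "dot3 v (mu_vec v) \<noteq> 0" and "dot3 (inverse3 v) (mu_vec (inverse3 v)) \<noteq> 0"
    and mu: "mu_vec v = (m1, m2, 0)" "m1 \<noteq> 0" "m2 \<noteq> 0"
    and mu_inverse: "mu_vec (inverse3 v) = (l1, l2, 0)" "l1 \<noteq> 0" "l2 \<noteq> 0"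
  shows "(\<forall>P\<in>phi q ` phi q ` orbit v. typeIII_pt q P) \<and>
    (\<forall>l\<in>lines_of q (phi q ` phi q ` orbit v). typeIII_line q l) \<and>
    Tphi2_sls q (mu_line_set q (phi q ` phi q ` orbit v)) \<and>
    (\<exists>S. Tphi2_sls q S \<and> mu_pt_set q (phi q ` phi q ` orbit v) = pencil ptTphi2 S)"
proof -
  let ?w = "frob_vec q (frob_vec q v)"
  note w = typeIII_conditions_frob_vec[OF typeIII_conditions_frob_vec[OF assms(1-3)]]
  have sls: "Tphi2_sls q (orbit (x, 0, y))" if "x \<noteq> 0" "y \<noteq> 0" for x y
    unfolding Tphi2_sls_def join_coordinate_points by (rule sls_on_orbit) (use that in simp_all)
  have "mu_line_set q (orbit ?w) = orbit (F (F l2), 0, F (F l1))"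
    using image_mu_line_lines_of_orbit[OF w(1)] mu_inverse
    by (simp add: inverse3_frob_vec mu_vec_frob_vec)
  moreover have "mu_pt_set q (orbit ?w) = orbit (F (F m2), 0, F (F m1))"
    unfolding mu_pt_set_def using image_mu_pt_orbit mu by (simp add: mu_vec_frob_vec)
  moreover have "pencil ptTphi2 (orbit (- F (F m1), 0, F (F m2))) = orbit (F (F m2), 0, F (F m1))"
    unfolding ptTphi2_def
    using pencil_orbit[OF cls_psi_vec_coordinate_points(2), of "(- F (F m1), 0, F (F m2))"] mu
    by simp
  ultimately show ?thesis
    unfolding image_phi_orbit using typeIII_orbit[OF w] sls mu mu_inverse
    by (auto intro!: exI[of _ "orbit (- F (F m1), 0, F (F m2))"])
qed

lemma mu_images_Tphi_plane:
  fixes \<theta> :: 'a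
  assumes "\<theta> \<noteq> 0" and "Norm q \<theta> \<noteq> 1"
  shows "(\<forall>P\<in>phi q ` Pi_theta q \<theta>. typeIII_pt q P) \<and>
    (\<forall>l\<in>lines_of q (phi q ` Pi_theta q \<theta>). typeIII_line q l) \<and>
    Tphi_sls q (mu_line_set q (phi q ` Pi_theta q \<theta>)) \<and>
    (\<exists>S. Tphi_sls q S \<and> mu_pt_set q (phi q ` Pi_theta q \<theta>) = pencil ptTphi S)"
  using mu_images_phi_orbit[OF _ mu_vec_T_plane_vector(3,4,1,5,6,2,7,8)[OF assms]] assms(1)
  unfolding Pi_theta_eq_orbit by simp

lemma mu_images_Tphi2_plane:
  fixes \<theta> :: 'a
  assumes "\<theta> \<noteq> 0" and "Norm q \<theta> \<noteq> 1"
  shows "(\<forall>P\<in>phi q ` phi q ` Pi_theta q \<theta>. typeIII_pt q P) \<and>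
    (\<forall>l\<in>lines_of q (phi q ` phi q ` Pi_theta q \<theta>). typeIII_line q l) \<and>
    Tphi2_sls q (mu_line_set q (phi q ` phi q ` Pi_theta q \<theta>)) \<and>
    (\<exists>S. Tphi2_sls q S \<and> mu_pt_set q (phi q ` phi q ` Pi_theta q \<theta>) = pencil ptTphi2 S)"
  using mu_images_phi2_orbit[OF _ mu_vec_T_plane_vector(3,4,1,5,6,2,7,8)[OF assms]] assms(1)
  unfolding Pi_theta_eq_orbit by simp

lemma mu_line_set_Fq_plane:
  fixes B :: "'a tri set set"
  assumes "B \<in> orb_ST q" and "is_Fq_plane q B"
    and "\<not> T_plane q B" and "\<not> Tphi_plane q B" and "\<not> Tphi2_plane q B"
  shows "mu_line_set q B \<in> orb_ST q \<and> is_Fq_plane q (mu_line_set q B)"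
proof -
  obtain v where "v \<noteq> (0, 0, 0)" and B: "B = orbit v"
    using assms(1) by (rule orb_ST_obtains)
  then have v: "all_coords_nonzero v"
    using assms(2) by (simp add: all_coords_nonzero_if_is_Fq_plane_orbit)
  then have "all_coords_nonzero (mu_vec (inverse3 v))"
    using assms(3-5) B by (simp add: all_coords_nonzero_mu_vec all_coords_nonzero_mu_vec_inverse3)
  moreover from this have "mu_line_set q B = orbit (mu_vec (inverse3 v))"
    unfolding B using v by (simp add: image_mu_line_lines_of_orbit all_coords_nonzero_imp_nonzero)
  ultimately show ?thesis
    by (simp add: orbit_in_orb_ST is_Fq_plane_orbit all_coords_nonzero_imp_nonzero)
qed

lemma mu_pt_set_Fq_plane:
  fixes B :: "'a tri set set"
  assumes "B \<in> orb_ST q" and "is_Fq_plane q B"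
    and "\<not> T_plane q B" and "\<not> Tphi_plane q B" and "\<not> Tphi2_plane q B"
  shows "\<exists>C. C \<in> orb_ST q \<and> is_Fq_plane q C \<and> mu_pt_set q B = lines_of q C"
proof -
  obtain v where "v \<noteq> (0, 0, 0)" and B: "B = orbit v"
    using assms(1) by (rule orb_ST_obtains)
  then have v: "all_coords_nonzero v"
    using assms(2) by (simp add: all_coords_nonzero_if_is_Fq_plane_orbit)
  then have mu: "all_coords_nonzero (mu_vec v)"
    using assms(3-5) B by (simp add: all_coords_nonzero_mu_vec)
  then have "mu_pt_set q B = lines_of q (orbit (inverse3 (mu_vec v)))"
    unfolding B mu_pt_set_def
    by (simp add: image_mu_pt_orbit lines_of_orbit all_coords_nonzero_inverse3 inverse3_inverse3
        all_coords_nonzero_imp_nonzero)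
  moreover have "all_coords_nonzero (inverse3 (mu_vec v))"
    using mu by (rule all_coords_nonzero_inverse3)
  ultimately show ?thesis
    by (metis orbit_in_orb_ST is_Fq_plane_orbit all_coords_nonzero_imp_nonzero)
qed

end

theorem lemma4p1:
  fixes q :: nat
  assumes "prime_power q"
    and "CARD('a::{finite,field}) = q ^ 3"
  shows
   "(\<forall>\<theta>::'a. \<theta> \<noteq> 0 \<and> Norm q \<theta> \<noteq> 1 \<longrightarrow>
        (\<forall>P\<in>Pi_theta q \<theta>. typeIII_pt q P) \<and>
        (\<forall>l\<in>lines_of q (Pi_theta q \<theta>). typeIII_line q l) \<and>
        mu_line_set q (Pi_theta q \<theta>) = S_theta q (- 1 / \<theta>) \<and>
        mu_pt_set q (Pi_theta q \<theta>) = pencil ptT (S_theta q (1 / \<theta>)))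
  \<and> (\<forall>\<theta>::'a. \<theta> \<noteq> 0 \<and> Norm q \<theta> \<noteq> 1 \<longrightarrow>
        (\<forall>P\<in>phi q ` Pi_theta q \<theta>. typeIII_pt q P) \<and>
        (\<forall>l\<in>lines_of q (phi q ` Pi_theta q \<theta>). typeIII_line q l) \<and>
        Tphi_sls q (mu_line_set q (phi q ` Pi_theta q \<theta>)) \<and>
        (\<exists>S. Tphi_sls q S \<and> mu_pt_set q (phi q ` Pi_theta q \<theta>) = pencil ptTphi S))
  \<and> (\<forall>\<theta>::'a. \<theta> \<noteq> 0 \<and> Norm q \<theta> \<noteq> 1 \<longrightarrow>
        (\<forall>P\<in>phi q ` phi q ` Pi_theta q \<theta>. typeIII_pt q P) \<and>
        (\<forall>l\<in>lines_of q (phi q ` phi q ` Pi_theta q \<theta>). typeIII_line q l) \<and>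
        Tphi2_sls q (mu_line_set q (phi q ` phi q ` Pi_theta q \<theta>)) \<and>
        (\<exists>S. Tphi2_sls q S \<and> mu_pt_set q (phi q ` phi q ` Pi_theta q \<theta>) = pencil ptTphi2 S))
  \<and> (\<forall>B::'a tri set set. B \<in> orb_ST q \<and> is_Fq_plane q B \<and>
        (\<forall>l\<in>lines_of q B. typeIII_line q l) \<and>
        \<not> T_plane q B \<and> \<not> Tphi_plane q B \<and> \<not> Tphi2_plane q B \<longrightarrow>
        mu_line_set q B \<in> orb_ST q \<and> is_Fq_plane q (mu_line_set q B))
  \<and> (\<forall>B::'a tri set set. B \<in> orb_ST q \<and> is_Fq_plane q B \<and>
        (\<forall>P\<in>B. typeIII_pt q P) \<and>
        \<not> T_plane q B \<and> \<not> Tphi_plane q B \<and> \<not> Tphi2_plane q B \<longrightarrow>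
        (\<exists>C. C \<in> orb_ST q \<and> is_Fq_plane q C \<and> mu_pt_set q B = lines_of q C))"
proof -
  interpret cubic_extension q "\<lambda>x::'a. x ^ q"
    using assms by unfold_locales simp_all
  show ?thesis
    by (intro conjI; intro allI impI; elim conjE)
      (rule mu_images_T_plane mu_images_Tphi_plane mu_images_Tphi2_plane
        mu_line_set_Fq_plane mu_pt_set_Fq_plane; assumption)+
qed

end
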